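(* Let $w,\tilde w\in W$ and $\varphi,\tilde\varphi\in S_1$. Then: (i) $m_{w,\varphi}$ is an irreducible P-module and equals $(\mathbf C^d)_{\mathrm{atom}}^{[p]}$, where $p=w^\infty$ and $d=|w|$; (ii) if $\mathfrak H$ is an atomic irreducible P-module, then $\mathfrak H$ is unitarily equivalent to $m_{v,\lambda}$ for some $v\in W_d$ and $\lambda\in S_1$ with $d=\dim(\mathfrak H)$; (iii) $m_{w,\varphi}$ and $m_{\tilde w,\tilde\varphi}$ are unitarily equivalent if and only if $(w,\varphi)=(\tilde w,\tilde\varphi)$.
   Context: A P-module is $(A,B,\mathfrak H)$ with $\mathfrak H$ finite-dimensional complex Hilbert, $A^*A+B^*B=\mathrm{id}$. Sub-module: subspace invariant under $A,B$; irreducible: no sub-modules besides $\{0\}$ and itself. Two P-modules are unitarily equivalent if a unitary $U$ satisfies $UA=\tilde AU$, $UB=\tilde BU$. $\mathfrak H=\mathfrak H_{\mathrm{comp}}\oplus\mathfrak H_{\mathrm{res}}$ orthogonally, where $\mathfrak H_{\mathrm{comp}}$ is a direct sum of irreducible sub-modules and $\mathfrak H_{\mathrm{res}}$ contains no non-zero sub-module. Rays: infinite binary sequences $p=x_1x_2\cdots$, $p_n=x_1\cdots x_n$, ${}_np=x_{n+1}\cdots$; $w\xi:=X_{x_n}\cdots X_{x_1}\xi$ for $w=x_1\cdots x_n$, $X_0=A,X_1=B$. Non-zero $\xi$ is contained in $p$ if $\|p_n\xi\|=\|\xi\|$ for all $n$. $\mathfrak H_{\mathrm{atom}}=\mathrm{span}\{\xi\in\mathfrak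 H_{\mathrm{comp}}:\xi\text{ contained in a periodic ray }w^\infty\}$; for periodic $p$, $\mathfrak H^{[p]}_{\mathrm{atom}}=\mathrm{span}\{\xi\in\mathfrak H_{\mathrm{atom}}:\xi\text{ contained in }{}_kp\text{ for some }k\}$. $\mathfrak H$ is atomic if $\mathfrak H_{\mathrm{atom}}=\mathfrak H_{\mathrm{comp}}$. A word $w$ is prime if $w\ne u^n$ for all words $u$ and $n\ge2$. $W_d$ is a fixed set of representatives of prime binary words of length $d$ modulo cyclic permutation; $W=\bigcup_{d\ge1}W_d$; $S_1$ is the unit circle. For $w\in W_d$ with standard basis $e_1,\dots,e_d$ of $\mathbf C^d$: $A_w e_n=e_{n+1}$, $B_we_n=0$ if the $n$-th digit of $w$ is $0$, and $B_we_n=e_{n+1}$, $A_we_n=0$ if it is $1$ (indices mod $d$). $D_\varphi=\mathrm{diag}(1,\dots,1,\varphi)$ and $m_{w,\varphi}=(A_wD_\varphi,B_wD_\varphi,\mathbf C^d)$. *)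

theory Defs
  imports Complex_Main "Jordan_Normal_Form.Matrix"
begin

text \<open>A finite-dimensional complex Hilbert space is modelled (up to unitary
isomorphism) as the standard space C^n = carrier_vec n with the standard
inner product; operators are n x n complex matrices.\<close>

definition adj :: "complex mat \<Rightarrow> complex mat" where
  "adj M = mat (dim_col M) (dim_row M) (\<lambda>(i,j). cnj (M $$ (j,i)))"

definition vnorm :: "complex vec \<Rightarrow> real" where
  "vnorm v = sqrt (\<Sum>i<dim_vec v. (cmod (v $ i))^2)"

definition pmodule :: "nat \<Rightarrow> complex mat \<Rightarrow> complex mat \<Rightarrow> bool" where
  "pmodule n A B \<longleftrightarrow> A \<in> carrier_mat n n \<and> B \<in> carrier_mat n n \<and>
     adj A * A + adj B * B = 1\<^sub>m n"

definition csubspace :: "nat \<Rightarrow> complex vec set \<Rightarrow> bool" where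
  "csubspace n V \<longleftrightarrow> V \<subseteq> carrier_vec n \<and> 0\<^sub>v n \<in> V \<and>
     (\<forall>x\<in>V. \<forall>y\<in>V. x + y \<in> V) \<and> (\<forall>c. \<forall>x\<in>V. c \<cdot>\<^sub>v x \<in> V)"

definition cspan :: "nat \<Rightarrow> complex vec set \<Rightarrow> complex vec set" where
  "cspan n S = \<Inter> {V. csubspace n V \<and> S \<subseteq> V}"

definition submodule :: "nat \<Rightarrow> complex mat \<Rightarrow> complex mat \<Rightarrow> complex vec set \<Rightarrow> bool" where
  "submodule n A B V \<longleftrightarrow> csubspace n V \<and> (\<forall>x\<in>V. A *\<^sub>v x \<in> V \<and> B *\<^sub>v x \<in> V)"

definition irred_sub :: "nat \<Rightarrow> complex mat \<Rightarrow> complex mat \<Rightarrow> complex vec set \<Rightarrow> bool" where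
  "irred_sub n A B M \<longleftrightarrow> submodule n A B M \<and> M \<noteq> {0\<^sub>v n} \<and>
     (\<forall>V. submodule n A B V \<and> V \<subseteq> M \<longrightarrow> V = {0\<^sub>v n} \<or> V = M)"

definition irreducible_pmod :: "nat \<Rightarrow> complex mat \<Rightarrow> complex mat \<Rightarrow> bool" where
  "irreducible_pmod n A B \<longleftrightarrow> irred_sub n A B (carrier_vec n)"

definition Hcomp :: "nat \<Rightarrow> complex mat \<Rightarrow> complex mat \<Rightarrow> complex vec set" where
  "Hcomp n A B = cspan n (\<Union> {M. irred_sub n A B M})"

text \<open>Words are bool lists (False = 0, True = 1); rays are bool sequences,
p 0 = x_1. The word x_1...x_n acts as X_{x_n} ... X_{x_1}.\<close>
definition act :: "complex mat \<Rightarrow> complex mat \<Rightarrow> bool list \<Rightarrow> complex vec \<Rightarrow> complex vec" where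
  "act A B w \<xi> = fold (\<lambda>x v. (if x then B else A) *\<^sub>v v) w \<xi>"

definition prefix_ray :: "(nat \<Rightarrow> bool) \<Rightarrow> nat \<Rightarrow> bool list" where
  "prefix_ray p n = map p [0..<n]"

definition shift_ray :: "nat \<Rightarrow> (nat \<Rightarrow> bool) \<Rightarrow> (nat \<Rightarrow> bool)" where
  "shift_ray k p = (\<lambda>i. p (i + k))"

definition per_ray :: "bool list \<Rightarrow> (nat \<Rightarrow> bool)" where
  "per_ray w = (\<lambda>i. w ! (i mod length w))"

definition contained :: "nat \<Rightarrow> complex mat \<Rightarrow> complex mat \<Rightarrow> complex vec \<Rightarrow> (nat \<Rightarrow> bool) \<Rightarrow> bool" where
  "contained n A B \<xi> p \<longleftrightarrow> \<xi> \<in> carrier_vec n \<and> \<xi> \<noteq> 0\<^sub>v n \<and>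
     (\<forall>k. vnorm (act A B (prefix_ray p k) \<xi>) = vnorm \<xi>)"

definition Hatom :: "nat \<Rightarrow> complex mat \<Rightarrow> complex mat \<Rightarrow> complex vec set" where
  "Hatom n A B = cspan n {\<xi> \<in> Hcomp n A B. \<exists>w. w \<noteq> [] \<and> contained n A B \<xi> (per_ray w)}"

definition Hatom_ray :: "nat \<Rightarrow> complex mat \<Rightarrow> complex mat \<Rightarrow> (nat \<Rightarrow> bool) \<Rightarrow> complex vec set" where
  "Hatom_ray n A B p = cspan n {\<xi> \<in> Hatom n A B. \<exists>k. contained n A B \<xi> (shift_ray k p)}"

definition atomic :: "nat \<Rightarrow> complex mat \<Rightarrow> complex mat \<Rightarrow> bool" where
  "atomic n A B \<longleftrightarrow> Hatom n A B = Hcomp n A B"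

definition unit_equiv :: "nat \<Rightarrow> complex mat \<Rightarrow> complex mat \<Rightarrow> nat \<Rightarrow> complex mat \<Rightarrow> complex mat \<Rightarrow> bool" where
  "unit_equiv n A B n' A' B' \<longleftrightarrow> (\<exists>U \<in> carrier_mat n' n.
     adj U * U = 1\<^sub>m n \<and> U * adj U = 1\<^sub>m n' \<and> U * A = A' * U \<and> U * B = B' * U)"

definition prime_word :: "bool list \<Rightarrow> bool" where
  "prime_word w \<longleftrightarrow> (\<forall>u k. k \<ge> 2 \<longrightarrow> w \<noteq> concat (replicate k u))"

definition rep_set :: "bool list set \<Rightarrow> bool" where
  "rep_set W \<longleftrightarrow> (\<forall>w\<in>W. prime_word w) \<and>
     (\<forall>v. prime_word v \<longrightarrow> (\<exists>!w. w \<in> W \<and> (\<exists>k. v = rotate k w)))"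

text \<open>Indices 0-based: e_i maps to e_{(i+1) mod d}.\<close>
definition A_w :: "bool list \<Rightarrow> complex mat" where
  "A_w w = mat (length w) (length w)
     (\<lambda>(j,i). if j = Suc i mod length w \<and> \<not> w ! i then 1 else 0)"

definition B_w :: "bool list \<Rightarrow> complex mat" where
  "B_w w = mat (length w) (length w)
     (\<lambda>(j,i). if j = Suc i mod length w \<and> w ! i then 1 else 0)"

definition D_phi :: "nat \<Rightarrow> complex \<Rightarrow> complex mat" where
  "D_phi d \<phi> = mat d d (\<lambda>(i,j). if i = j then (if i = d - 1 then \<phi> else 1) else 0)"

end

(* In m_{w,phi} the letters act as a weighted cyclic shift along the cycle w, and e_i is
   carried isometrically exactly along the ray that reads w from position i. As w is prime,
   the word rotate i w kills every basis vector except e_i, which yields irreducibility; and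
   the trace of the matrix of the word w is phi, which together with the uniqueness of the
   representatives separates the modules up to unitary equivalence.
   Conversely, in an atomic irreducible P-module some vector is contained in a periodic ray,
   which after shifting may be taken to be r^infinity for a representative r. The matrix of
   r then has an eigenvector with eigenvalue of modulus one that is contained in
   r^infinity, and its orbit under the prefixes of r is an orthonormal basis: orthogonal
   because vectors contained in distinct rays are orthogonal, spanning by irreducibility.
   In this basis the module is m_{r,lam}. *)

theory Submission
  imports Defs "Jordan_Normal_Form.Spectral_Radius" "HOL-Analysis.L2_Norm"
begin

lemma vnorm_eq_L2_set: "vnorm v = L2_set (\<lambda>i. cmod (v $ i)) {..<dim_vec v}"
  by (simp add: vnorm_def L2_set_def)

lemma vnorm_nonneg: "vnorm v \<ge> 0"
  by (simp add: vnorm_eq_L2_set)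

lemma vnorm_eq_0_iff: "v \<in> carrier_vec n \<Longrightarrow> vnorm v = 0 \<longleftrightarrow> v = 0\<^sub>v n"
  by (auto simp: vnorm_eq_L2_set L2_set_eq_0_iff)

lemma vnorm_pos: "v \<in> carrier_vec n \<Longrightarrow> v \<noteq> 0\<^sub>v n \<Longrightarrow> vnorm v > 0"
  using vnorm_eq_0_iff vnorm_nonneg by (metis less_eq_real_def)

lemma vnorm_smult: "vnorm (c \<cdot>\<^sub>v v) = cmod c * vnorm v"
  unfolding vnorm_eq_L2_set by (simp add: L2_set_right_distrib norm_mult cong: L2_set_cong_simp)

lemma vnorm_unit_vec:
  assumes "i < n"
  shows "vnorm (unit_vec n i) = 1"
proof -
  have "(\<Sum>j<n. (cmod (unit_vec n i $ j))\<^sup>2) = (\<Sum>j<n. if j = i then 1 else 0)"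
    by (rule sum.cong) (auto simp: unit_vec_def)
  then show ?thesis using assms by (simp add: vnorm_def)
qed

lemma vnorm_le_sum_cmod: "vnorm v \<le> (\<Sum>i<dim_vec v. cmod (v $ i))"
  unfolding vnorm_eq_L2_set by (rule L2_set_le_sum) simp

lemma cscalar_prod_self: "v \<bullet>c v = of_real ((vnorm v)\<^sup>2)"
  unfolding vnorm_def scalar_prod_def
  by (simp add: atLeast0LessThan sum_nonneg of_real_sum complex_mult_cnj cmod_def power2_eq_square)

lemma dim_adj [simp]: "dim_row (adj M) = dim_col M" "dim_col (adj M) = dim_row M"
  by (simp_all add: adj_def)

lemma adj_carrier [simp]: "M \<in> carrier_mat r c \<Longrightarrow> adj M \<in> carrier_mat c r"
  by (simp add: adj_def)

lemma adj_adj [simp]: "M \<in> carrier_mat r c \<Longrightarrow> adj (adj M) = M"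
  by (intro eq_matI) (auto simp: adj_def)

lemma adj_one [simp]: "adj (1\<^sub>m n) = (1\<^sub>m n :: complex mat)"
  by (intro eq_matI) (auto simp: adj_def)

lemma mult_mat_vec_index:
  "M \<in> carrier_mat r c \<Longrightarrow> x \<in> carrier_vec c \<Longrightarrow> i < r \<Longrightarrow> (M *\<^sub>v x) $ i = (\<Sum>j<c. M $$ (i, j) * x $ j)"
  by (auto simp: scalar_prod_def atLeast0LessThan intro!: sum.cong)

lemma mult_mat_vec_zero [simp]: "M \<in> carrier_mat r c \<Longrightarrow> M *\<^sub>v 0\<^sub>v c = 0\<^sub>v r"
  by (intro eq_vecI) (auto simp: scalar_prod_def)

lemma cscalar_prod_adj:
  assumes M: "M \<in> carrier_mat r c" and x: "x \<in> carrier_vec c" and y: "y \<in> carrier_vec r"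
  shows "(M *\<^sub>v x) \<bullet>c y = x \<bullet>c (adj M *\<^sub>v y)"
proof -
  have "(M *\<^sub>v x) \<bullet>c y = (\<Sum>i<r. \<Sum>j<c. x $ j * (M $$ (i, j) * cnj (y $ i)))"
    using M x y by (simp add: scalar_prod_def atLeast0LessThan sum_distrib_left sum_distrib_right mult_ac)
  also have "\<dots> = (\<Sum>j<c. \<Sum>i<r. x $ j * (M $$ (i, j) * cnj (y $ i)))"
    by (rule sum.swap)
  also have "\<dots> = x \<bullet>c (adj M *\<^sub>v y)"
    using M x y by (simp add: adj_def scalar_prod_def atLeast0LessThan sum_distrib_left mult_ac)
  finally show ?thesis .
qed

lemma cscalar_prod_add_right:
  fixes x u v :: "'a :: conjugatable_ring vec"
  assumes "x \<in> carrier_vec n" "u \<in> carrier_vec n" "v \<in> carrier_vec n"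
  shows "x \<bullet>c (u + v) = x \<bullet>c u + x \<bullet>c v"
  using assms by (simp add: conjugate_add_vec scalar_prod_add_distrib[of _ n])

lemma mult_mat_vec_unit_vec:
  fixes M :: "'a :: comm_ring_1 mat"
  assumes M: "M \<in> carrier_mat r c" and k: "k < c" and j: "j < r"
  shows "(M *\<^sub>v unit_vec c k) $ j = M $$ (j, k)"
proof -
  have "(M *\<^sub>v unit_vec c k) $ j = (\<Sum>l<c. if l = k then M $$ (j, k) else 0)"
    unfolding mult_mat_vec_index[OF M unit_vec_carrier j] using k by (intro sum.cong) auto
  then show ?thesis using k by simp
qed

lemma mult_mat_vec_index_unit_vecs:
  fixes M :: "'a :: comm_ring_1 mat"
  assumes M: "M \<in> carrier_mat r c" and x: "x \<in> carrier_vec c" and j: "j < r"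
  shows "(M *\<^sub>v x) $ j = (\<Sum>k<c. (M *\<^sub>v unit_vec c k) $ j * x $ k)"
  unfolding mult_mat_vec_index[OF M x j]
  by (rule sum.cong) (simp_all add: mult_mat_vec_unit_vec[OF M _ j] del: index_mult_mat_vec)

lemma mat_eqI_unit_vecs:
  fixes M N :: "'a :: comm_ring_1 mat"
  assumes M: "M \<in> carrier_mat r c" and N: "N \<in> carrier_mat r c"
    and eq: "\<And>k. k < c \<Longrightarrow> M *\<^sub>v unit_vec c k = N *\<^sub>v unit_vec c k"
  shows "M = N"
proof (rule eq_matI)
  fix i j assume "i < dim_row N" "j < dim_col N"
  with M N eq[of j] show "M $$ (i, j) = N $$ (i, j)"
    by (metis carrier_matD mult_mat_vec_unit_vec)
qed (use M N in auto)

definition mat_trace :: "'a :: comm_ring mat \<Rightarrow> 'a" where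
  "mat_trace M = (\<Sum>i<dim_row M. M $$ (i, i))"

lemma mat_trace_one [simp]: "mat_trace (1\<^sub>m n) = of_nat n"
  by (simp add: mat_trace_def)

lemma mat_trace_mult_comm:
  assumes X: "X \<in> carrier_mat r c" and Y: "Y \<in> carrier_mat c r"
  shows "mat_trace (X * Y) = mat_trace (Y * X)"
proof -
  have "mat_trace (X * Y) = (\<Sum>i<r. \<Sum>j<c. X $$ (i, j) * Y $$ (j, i))"
    using X Y by (simp add: mat_trace_def scalar_prod_def atLeast0LessThan)
  also have "\<dots> = (\<Sum>j<c. \<Sum>i<r. Y $$ (j, i) * X $$ (i, j))"
    by (subst sum.swap) (simp add: mult.commute)
  also have "\<dots> = mat_trace (Y * X)"
    using X Y by (simp add: mat_trace_def scalar_prod_def atLeast0LessThan)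
  finally show ?thesis .
qed

lemma mat_trace_unit_vecs:
  fixes M :: "'a :: comm_ring_1 mat"
  assumes "M \<in> carrier_mat n n"
  shows "mat_trace M = (\<Sum>k<n. (M *\<^sub>v unit_vec n k) $ k)"
  unfolding mat_trace_def using assms
  by (intro sum.cong) (auto simp: mult_mat_vec_unit_vec simp del: index_mult_mat_vec)

lemma unitary_dim_eq:
  assumes U: "U \<in> carrier_mat m n" and "adj U * U = 1\<^sub>m n" and "U * adj U = 1\<^sub>m m"
  shows "m = n"
proof -
  have "of_nat n = mat_trace (adj U * U)" using assms by simp
  also have "\<dots> = mat_trace (U * adj U)" using U by (intro mat_trace_mult_comm) auto
  also have "\<dots> = of_nat m" using assms by simp
  finally show ?thesis by simp
qed

lemma mat_trace_unitary_conj: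
  assumes U: "U \<in> carrier_mat m n" and M: "M \<in> carrier_mat n n" and "adj U * U = 1\<^sub>m n"
  shows "mat_trace (U * M * adj U) = mat_trace M"
proof -
  have "mat_trace (U * M * adj U) = mat_trace (adj U * (U * M))"
    using U M by (intro mat_trace_mult_comm) auto
  also have "adj U * (U * M) = M"
    using assms by (simp flip: assoc_mult_mat[OF adj_carrier[OF U] U M])
  finally show ?thesis .
qed

lemma csubspace_carrier_vec: "csubspace n (carrier_vec n)"
  by (auto simp: csubspace_def)

lemma cspan_superset: "S \<subseteq> cspan n S"
  by (auto simp: cspan_def)

lemma cspan_least: "csubspace n V \<Longrightarrow> S \<subseteq> V \<Longrightarrow> cspan n S \<subseteq> V"
  by (auto simp: cspan_def)

lemma csubspace_cspan:
  assumes "S \<subseteq> carrier_vec n"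
  shows "csubspace n (cspan n S)"
proof -
  have "carrier_vec n \<in> {V. csubspace n V \<and> S \<subseteq> V}"
    using assms csubspace_carrier_vec by auto
  then show ?thesis
    unfolding cspan_def csubspace_def by blast
qed

lemma cspan_subset_carrier_vec: "S \<subseteq> carrier_vec n \<Longrightarrow> cspan n S \<subseteq> carrier_vec n"
  by (rule cspan_least[OF csubspace_carrier_vec])

lemma cspan_empty: "cspan n {} = {0\<^sub>v n}"
proof
  show "cspan n {} \<subseteq> {0\<^sub>v n}" by (rule cspan_least) (auto simp: csubspace_def)
  show "{0\<^sub>v n} \<subseteq> cspan n {}" using csubspace_cspan[of "{}" n] by (auto simp: csubspace_def)
qed

lemma carrier_vec_subset_csubspace:
  assumes V: "csubspace n V" and units: "\<And>k. k < n \<Longrightarrow> unit_vec n k \<in> V"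
  shows "carrier_vec n \<subseteq> V"
proof
  fix x :: "complex vec" assume x: "x \<in> carrier_vec n"
  have "vec n (\<lambda>j. if j < s then x $ j else 0) \<in> V" for s
  proof (induct s)
    case 0
    then show ?case using V by (simp add: csubspace_def zero_vec_def)
  next
    case (Suc s)
    show ?case
    proof (cases "s < n")
      case True
      have "vec n (\<lambda>j. if j < Suc s then x $ j else 0)
          = vec n (\<lambda>j. if j < s then x $ j else 0) + x $ s \<cdot>\<^sub>v unit_vec n s"
        using True by (intro eq_vecI) (auto simp: less_Suc_eq)
      then show ?thesis using Suc V units[OF True] by (simp add: csubspace_def)
    next
      case False
      then have "vec n (\<lambda>j. if j < Suc s then x $ j else 0) = vec n (\<lambda>j. if j < s then x $ j else 0)"
        by (intro eq_vecI) auto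
      then show ?thesis using Suc by simp
    qed
  qed
  moreover have "vec n (\<lambda>j. if j < n then x $ j else 0) = x" using x by (intro eq_vecI) auto
  ultimately show "x \<in> V" by metis
qed

lemma cspan_eq_carrier_vecI:
  assumes "S \<subseteq> carrier_vec n" and "\<And>k. k < n \<Longrightarrow> unit_vec n k \<in> S"
  shows "cspan n S = carrier_vec n"
  using assms cspan_subset_carrier_vec carrier_vec_subset_csubspace[OF csubspace_cspan] cspan_superset
  by (metis subset_antisym subset_iff)

lemma csubspace_preimage:
  assumes M: "M \<in> carrier_mat m n" and V: "csubspace m V"
  shows "csubspace n {x \<in> carrier_vec n. M *\<^sub>v x \<in> V}"
  using V M unfolding csubspace_def
  by (auto simp: mult_add_distrib_mat_vec[OF M] mult_mat_vec[OF M])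

lemma csubspace_equalizer:
  assumes M: "M \<in> carrier_mat m n" and N: "N \<in> carrier_mat m n"
  shows "csubspace n {x \<in> carrier_vec n. M *\<^sub>v x = N *\<^sub>v x}"
  using M N unfolding csubspace_def
  by (auto simp: mult_add_distrib_mat_vec[OF M] mult_add_distrib_mat_vec[OF N]
      mult_mat_vec[OF M] mult_mat_vec[OF N])

section \<open>Words acting on a P-module\<close>

definition letter_mat :: "complex mat \<Rightarrow> complex mat \<Rightarrow> bool \<Rightarrow> complex mat" where
  "letter_mat A B b = (if b then B else A)"

fun word_mat :: "nat \<Rightarrow> complex mat \<Rightarrow> complex mat \<Rightarrow> bool list \<Rightarrow> complex mat" where
  "word_mat n A B [] = 1\<^sub>m n"
| "word_mat n A B (b # u) = word_mat n A B u * letter_mat A B b"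

lemma act_Nil [simp]: "act A B [] x = x"
  by (simp add: act_def)

lemma act_Cons [simp]: "act A B (b # u) x = act A B u (letter_mat A B b *\<^sub>v x)"
  by (simp add: act_def letter_mat_def)

lemma act_append: "act A B (u @ v) x = act A B v (act A B u x)"
  by (simp add: act_def)

lemma act_snoc: "act A B (u @ [b]) x = letter_mat A B b *\<^sub>v act A B u x"
  by (simp add: act_def letter_mat_def)

context
  fixes n :: nat and A B :: "complex mat"
  assumes A: "A \<in> carrier_mat n n" and B: "B \<in> carrier_mat n n"
begin

lemma letter_mat_carrier [simp]: "letter_mat A B b \<in> carrier_mat n n"
  using A B by (simp add: letter_mat_def)

lemma word_mat_carrier [simp]: "word_mat n A B u \<in> carrier_mat n n"
  by (induct u) auto

lemma dim_word_mat [simp]: "dim_row (word_mat n A B u) = n" "dim_col (word_mat n A B u) = n"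
  using word_mat_carrier by (metis carrier_matD)+

lemma act_eq_word_mat: "x \<in> carrier_vec n \<Longrightarrow> act A B u x = word_mat n A B u *\<^sub>v x"
  by (induct u arbitrary: x)
    (auto simp: assoc_mult_mat_vec[OF word_mat_carrier letter_mat_carrier]
      intro: mult_mat_vec_carrier[OF letter_mat_carrier])

lemma act_carrier: "x \<in> carrier_vec n \<Longrightarrow> act A B u x \<in> carrier_vec n"
  by (simp add: act_eq_word_mat mult_mat_vec_carrier[OF word_mat_carrier])

lemma act_smult: "x \<in> carrier_vec n \<Longrightarrow> act A B u (c \<cdot>\<^sub>v x) = c \<cdot>\<^sub>v act A B u x"
  by (simp add: act_eq_word_mat mult_mat_vec[OF word_mat_carrier])

lemma act_zero: "act A B u (0\<^sub>v n) = 0\<^sub>v n"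
  by (simp add: act_eq_word_mat)

lemma word_mat_power_mult_vec:
  "x \<in> carrier_vec n \<Longrightarrow> word_mat n A B r ^\<^sub>m k *\<^sub>v x = act A B (concat (replicate k r)) x"
proof (induct k arbitrary: x)
  case (Suc k)
  have W: "word_mat n A B r *\<^sub>v x \<in> carrier_vec n"
    using Suc.prems by (simp add: mult_mat_vec_carrier[OF word_mat_carrier])
  have "word_mat n A B r ^\<^sub>m Suc k *\<^sub>v x = word_mat n A B r ^\<^sub>m k *\<^sub>v (word_mat n A B r *\<^sub>v x)"
    using Suc.prems by (simp add: assoc_mult_mat_vec[OF pow_carrier_mat[OF word_mat_carrier] word_mat_carrier])
  also have "\<dots> = act A B (concat (replicate (Suc k) r)) x"
    using Suc.hyps[OF W] Suc.prems by (simp add: act_append act_eq_word_mat)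
  finally show ?case .
qed simp

lemma word_mat_intertwine:
  assumes A': "A' \<in> carrier_mat m m" and B': "B' \<in> carrier_mat m m" and U: "U \<in> carrier_mat m n"
    and "U * A = A' * U" and "U * B = B' * U"
  shows "U * word_mat n A B u = word_mat m A' B' u * U"
proof (induct u)
  case (Cons b u)
  have X: "letter_mat A B b \<in> carrier_mat n n" "letter_mat A' B' b \<in> carrier_mat m m"
    using letter_mat_carrier A' B' by (auto simp: letter_mat_def)
  have W: "word_mat m A' B' u \<in> carrier_mat m m"
    using A' B' by (induct u) (auto simp: letter_mat_def)
  have "U * word_mat n A B (b # u) = (U * word_mat n A B u) * letter_mat A B b"
    using U X by (simp add: assoc_mult_mat[of _ m n _ n _ n])
  also have "\<dots> = word_mat m A' B' u * (U * letter_mat A B b)"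
    using Cons U X W by (simp add: assoc_mult_mat[of _ m m _ n _ n])
  also have "U * letter_mat A B b = letter_mat A' B' b * U"
    using assms by (simp add: letter_mat_def)
  also have "word_mat m A' B' u * (letter_mat A' B' b * U) = word_mat m A' B' (b # u) * U"
    using U X W by (simp add: assoc_mult_mat[of _ m m _ m _ n])
  finally show ?case .
qed (use U in simp)

end

lemma unit_equiv_mat_trace_word_mat:
  assumes "unit_equiv n A B n' A' B'"
    and A: "A \<in> carrier_mat n n" and B: "B \<in> carrier_mat n n"
    and A': "A' \<in> carrier_mat n' n'" and B': "B' \<in> carrier_mat n' n'"
  shows "n = n'" and "mat_trace (word_mat n' A' B' u) = mat_trace (word_mat n A B u)"
proof -
  obtain U where U: "U \<in> carrier_mat n' n" and unitary: "adj U * U = 1\<^sub>m n" "U * adj U = 1\<^sub>m n'"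
    and "U * A = A' * U" "U * B = B' * U"
    using assms(1) unfolding unit_equiv_def by blast
  then have intertwine: "U * word_mat n A B u = word_mat n' A' B' u * U"
    by (intro word_mat_intertwine[OF A B A' B' U])
  show "n = n'" using unitary_dim_eq[OF U unitary] by simp
  let ?M = "word_mat n A B u" and ?M' = "word_mat n' A' B' u"
  have M: "?M \<in> carrier_mat n n" and M': "?M' \<in> carrier_mat n' n'"
    by (simp_all add: word_mat_carrier A B A' B')
  have "?M' = ?M' * (U * adj U)" using unitary M' by simp
  also have "\<dots> = ?M' * U * adj U" using assoc_mult_mat[OF M' U adj_carrier[OF U]] by simp
  also have "\<dots> = U * ?M * adj U" using intertwine by simp
  finally show "mat_trace ?M' = mat_trace ?M"
    using mat_trace_unitary_conj[OF U M unitary(1)] by simp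
qed

lemma pmodule_carrier:
  "pmodule n A B \<Longrightarrow> A \<in> carrier_mat n n" "pmodule n A B \<Longrightarrow> B \<in> carrier_mat n n"
  by (simp_all add: pmodule_def)

lemma pmodule_resolution:
  assumes P: "pmodule n A B" and x: "x \<in> carrier_vec n"
  shows "adj A *\<^sub>v (A *\<^sub>v x) + adj B *\<^sub>v (B *\<^sub>v x) = x"
proof -
  have A: "A \<in> carrier_mat n n" and B: "B \<in> carrier_mat n n"
    and E: "adj A * A + adj B * B = 1\<^sub>m n" using P by (auto simp: pmodule_def)
  have "adj A * A \<in> carrier_mat n n" "adj B * B \<in> carrier_mat n n"
    using A B by (meson adj_carrier mult_carrier_mat)+
  then have "adj A *\<^sub>v (A *\<^sub>v x) + adj B *\<^sub>v (B *\<^sub>v x) = (adj A * A + adj B * B) *\<^sub>v x"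
    using A B x by (simp add: add_mult_distrib_mat_vec assoc_mult_mat_vec[of _ n n _ n])
  then show ?thesis using E x by simp
qed

lemma pmodule_vnorm_sum:
  assumes P: "pmodule n A B" and x: "x \<in> carrier_vec n"
  shows "(vnorm (A *\<^sub>v x))\<^sup>2 + (vnorm (B *\<^sub>v x))\<^sup>2 = (vnorm x)\<^sup>2"
proof -
  have A: "A \<in> carrier_mat n n" and B: "B \<in> carrier_mat n n" using P by (auto simp: pmodule_def)
  have "(A *\<^sub>v x) \<bullet>c (A *\<^sub>v x) + (B *\<^sub>v x) \<bullet>c (B *\<^sub>v x)
      = x \<bullet>c (adj A *\<^sub>v (A *\<^sub>v x)) + x \<bullet>c (adj B *\<^sub>v (B *\<^sub>v x))"
    using A B x by (simp add: cscalar_prod_adj)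
  also have "\<dots> = x \<bullet>c (adj A *\<^sub>v (A *\<^sub>v x) + adj B *\<^sub>v (B *\<^sub>v x))"
    using A B x by (intro cscalar_prod_add_right[symmetric]) (auto intro!: mult_mat_vec_carrier[of _ n n])
  also have "\<dots> = x \<bullet>c x"
    by (simp add: pmodule_resolution[OF P x])
  finally have "complex_of_real ((vnorm (A *\<^sub>v x))\<^sup>2 + (vnorm (B *\<^sub>v x))\<^sup>2) = of_real ((vnorm x)\<^sup>2)"
    by (simp add: cscalar_prod_self)
  then show ?thesis using of_real_eq_iff by blast
qed

lemma vnorm_letter_mat_le:
  assumes P: "pmodule n A B" and x: "x \<in> carrier_vec n"
  shows "vnorm (letter_mat A B b *\<^sub>v x) \<le> vnorm x"
proof -
  have "(vnorm (A *\<^sub>v x))\<^sup>2 \<le> (vnorm x)\<^sup>2 \<and> (vnorm (B *\<^sub>v x))\<^sup>2 \<le> (vnorm x)\<^sup>2"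
    using pmodule_vnorm_sum[OF P x] by (smt (verit) zero_le_power2)
  then have "(vnorm (letter_mat A B b *\<^sub>v x))\<^sup>2 \<le> (vnorm x)\<^sup>2"
    by (simp add: letter_mat_def)
  then show ?thesis using vnorm_nonneg power2_le_imp_le by blast
qed

lemma vnorm_act_le: "pmodule n A B \<Longrightarrow> x \<in> carrier_vec n \<Longrightarrow> vnorm (act A B u x) \<le> vnorm x"
proof (induct u arbitrary: x)
  case (Cons b u)
  have "letter_mat A B b *\<^sub>v x \<in> carrier_vec n"
    using Cons.prems letter_mat_carrier pmodule_carrier by (metis mult_mat_vec_carrier)
  then show ?case
    using Cons vnorm_letter_mat_le[OF Cons.prems] by (fastforce intro: order_trans)
qed simp

lemma isometric_letter_mat:
  assumes P: "pmodule n A B" and x: "x \<in> carrier_vec n"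
    and eq: "vnorm (letter_mat A B b *\<^sub>v x) = vnorm x"
  shows "letter_mat A B (\<not> b) *\<^sub>v x = 0\<^sub>v n" "adj (letter_mat A B b) *\<^sub>v (letter_mat A B b *\<^sub>v x) = x"
proof -
  have A: "A \<in> carrier_mat n n" and B: "B \<in> carrier_mat n n" using P by (auto simp: pmodule_def)
  from pmodule_vnorm_sum[OF P x] eq have "vnorm (letter_mat A B (\<not> b) *\<^sub>v x) = 0"
    by (cases b) (auto simp: letter_mat_def)
  then show zero: "letter_mat A B (\<not> b) *\<^sub>v x = 0\<^sub>v n"
    using A B x by (subst vnorm_eq_0_iff[symmetric]) (auto intro: mult_mat_vec_carrier[OF letter_mat_carrier])
  show "adj (letter_mat A B b) *\<^sub>v (letter_mat A B b *\<^sub>v x) = x"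
  proof -
    have "adj A *\<^sub>v (A *\<^sub>v x) \<in> carrier_vec n" "adj B *\<^sub>v (B *\<^sub>v x) \<in> carrier_vec n"
      using A B x by (auto intro!: mult_mat_vec_carrier[of _ n n])
    then show ?thesis
      using pmodule_resolution[OF P x] zero A B
      by (cases b) (simp_all add: letter_mat_def mult_mat_vec_zero[OF adj_carrier[OF A]]
          mult_mat_vec_zero[OF adj_carrier[OF B]])
  qed
qed

section \<open>Vectors contained in a ray\<close>

lemma prefix_ray_Suc: "prefix_ray p (Suc k) = prefix_ray p k @ [p k]"
  by (simp add: prefix_ray_def)

lemma prefix_ray_add: "prefix_ray p (a + k) = prefix_ray p a @ prefix_ray (shift_ray a p) k"
  by (induct k) (simp_all add: prefix_ray_Suc shift_ray_def add.commute, simp add: prefix_ray_def)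

lemma shift_ray_shift_ray [simp]: "shift_ray a (shift_ray b p) = shift_ray (a + b) p"
  by (simp add: shift_ray_def ac_simps)

lemma length_prefix_ray [simp]: "length (prefix_ray p k) = k"
  by (simp add: prefix_ray_def)

lemma nth_prefix_ray [simp]: "i < k \<Longrightarrow> prefix_ray p k ! i = p i"
  by (simp add: prefix_ray_def)

definition isometric_along :: "complex mat \<Rightarrow> complex mat \<Rightarrow> complex vec \<Rightarrow> (nat \<Rightarrow> bool) \<Rightarrow> bool" where
  "isometric_along A B x p \<longleftrightarrow> (\<forall>k. vnorm (act A B (prefix_ray p k) x) = vnorm x)"

lemma contained_iff_isometric_along:
  "contained n A B x p \<longleftrightarrow> x \<in> carrier_vec n \<and> x \<noteq> 0\<^sub>v n \<and> isometric_along A B x p"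
  by (simp add: contained_def isometric_along_def)

lemma isometric_along_act_prefix:
  "isometric_along A B x p \<Longrightarrow> isometric_along A B (act A B (prefix_ray p a) x) (shift_ray a p)"
  unfolding isometric_along_def by (metis act_append prefix_ray_add)

lemma isometric_along_first_letter:
  assumes P: "pmodule n A B" and x: "x \<in> carrier_vec n" and iso: "isometric_along A B x p"
  shows "letter_mat A B (\<not> p 0) *\<^sub>v x = 0\<^sub>v n"
    and "adj (letter_mat A B (p 0)) *\<^sub>v (letter_mat A B (p 0) *\<^sub>v x) = x"
    and "isometric_along A B (letter_mat A B (p 0) *\<^sub>v x) (shift_ray 1 p)"
proof -
  have one: "prefix_ray p 1 = [p 0]" by (simp add: prefix_ray_def)
  then have "vnorm (letter_mat A B (p 0) *\<^sub>v x) = vnorm x"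
    using iso unfolding isometric_along_def by (metis act_Cons act_Nil)
  from isometric_letter_mat[OF P x this]
  show "letter_mat A B (\<not> p 0) *\<^sub>v x = 0\<^sub>v n"
    and "adj (letter_mat A B (p 0)) *\<^sub>v (letter_mat A B (p 0) *\<^sub>v x) = x" .
  show "isometric_along A B (letter_mat A B (p 0) *\<^sub>v x) (shift_ray 1 p)"
    using isometric_along_act_prefix[OF iso, of 1] by (simp only: one act_Cons act_Nil)
qed

lemma contained_act_prefix:
  assumes P: "pmodule n A B" and x: "contained n A B x p"
  shows "contained n A B (act A B (prefix_ray p a) x) (shift_ray a p)"
proof -
  have x: "x \<in> carrier_vec n" "x \<noteq> 0\<^sub>v n" and iso: "isometric_along A B x p"
    using x by (simp_all add: contained_iff_isometric_along)
  have c: "act A B (prefix_ray p a) x \<in> carrier_vec n"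
    using P x by (simp add: act_carrier pmodule_carrier)
  have "vnorm (act A B (prefix_ray p a) x) = vnorm x" using iso by (simp add: isometric_along_def)
  then have "act A B (prefix_ray p a) x \<noteq> 0\<^sub>v n" using x c vnorm_eq_0_iff by metis
  then show ?thesis
    using c isometric_along_act_prefix[OF iso] by (simp add: contained_iff_isometric_along)
qed

lemma cscalar_prod_first_letter:
  assumes P: "pmodule n A B" and x: "x \<in> carrier_vec n" and y: "y \<in> carrier_vec n"
    and iso: "isometric_along A B x p"
  shows "x \<bullet>c y = (letter_mat A B (p 0) *\<^sub>v x) \<bullet>c (letter_mat A B (p 0) *\<^sub>v y)"
proof -
  let ?X = "letter_mat A B (p 0)"
  have X: "?X \<in> carrier_mat n n" using P by (simp add: pmodule_carrier)
  have "x \<bullet>c y = (adj ?X *\<^sub>v (?X *\<^sub>v x)) \<bullet>c y"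
    using isometric_along_first_letter(2)[OF P x iso] by simp
  also have "\<dots> = (?X *\<^sub>v x) \<bullet>c (?X *\<^sub>v y)"
    using X x y by (subst cscalar_prod_adj[OF adj_carrier[OF X]]) auto
  finally show ?thesis .
qed

lemma isometric_along_orthogonal_at:
  assumes P: "pmodule n A B"
  shows "x \<in> carrier_vec n \<Longrightarrow> y \<in> carrier_vec n \<Longrightarrow> isometric_along A B x p \<Longrightarrow>
    isometric_along A B y q \<Longrightarrow> \<forall>s<t. p s = q s \<Longrightarrow> p t \<noteq> q t \<Longrightarrow> x \<bullet>c y = 0"
proof (induct t arbitrary: x y p q)
  case 0
  let ?X = "letter_mat A B (p 0)"
  have X: "?X \<in> carrier_mat n n" using P by (simp add: pmodule_carrier)
  have "?X *\<^sub>v y = 0\<^sub>v n"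
    using isometric_along_first_letter(1)[OF P "0.prems"(2,4)] "0.prems"(6) by (cases "p 0") auto
  then show ?case
    using cscalar_prod_first_letter[OF P "0.prems"(1,2,3)] X "0.prems"(1) by simp
next
  case (Suc t)
  let ?X = "letter_mat A B (p 0)"
  have X: "?X \<in> carrier_mat n n" using P by (simp add: pmodule_carrier)
  have "(?X *\<^sub>v x) \<bullet>c (?X *\<^sub>v y) = 0"
  proof (rule Suc.hyps)
    show "?X *\<^sub>v x \<in> carrier_vec n" "?X *\<^sub>v y \<in> carrier_vec n" using X Suc.prems by auto
    show "isometric_along A B (?X *\<^sub>v x) (shift_ray 1 p)"
      using isometric_along_first_letter(3)[OF P Suc.prems(1,3)] .
    have "q 0 = p 0" using Suc.prems(5) by auto
    then show "isometric_along A B (?X *\<^sub>v y) (shift_ray 1 q)"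
      using isometric_along_first_letter(3)[OF P Suc.prems(2,4)] by simp
    show "\<forall>s<t. shift_ray 1 p s = shift_ray 1 q s" "shift_ray 1 p t \<noteq> shift_ray 1 q t"
      using Suc.prems(5,6) by (simp_all add: shift_ray_def)
  qed
  then show ?case using cscalar_prod_first_letter[OF P Suc.prems(1,2,3)] by simp
qed

text \<open>A letter acting isometrically on x is inverted on x by its adjoint; at the first
  position where the rays differ, the letter of the first ray kills y.\<close>

lemma isometric_along_orthogonal:
  assumes "pmodule n A B" "x \<in> carrier_vec n" "y \<in> carrier_vec n"
    and "isometric_along A B x p" "isometric_along A B y q" and "p \<noteq> q"
  shows "x \<bullet>c y = 0"
proof -
  define t where "t = (LEAST t. p t \<noteq> q t)"
  have ex: "\<exists>t. p t \<noteq> q t" using \<open>p \<noteq> q\<close> by auto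
  have "p t \<noteq> q t" unfolding t_def by (rule LeastI_ex[OF ex])
  moreover have "\<forall>s<t. p s = q s" unfolding t_def using not_less_Least by blast
  ultimately show ?thesis using isometric_along_orthogonal_at assms by blast
qed

lemma isometric_alongI_frequently:
  assumes P: "pmodule n A B" and x: "x \<in> carrier_vec n"
    and large: "\<And>k. \<exists>K\<ge>k. vnorm (act A B (prefix_ray p K) x) \<ge> vnorm x"
  shows "isometric_along A B x p"
  unfolding isometric_along_def
proof
  fix k
  obtain K where "K \<ge> k" and K: "vnorm (act A B (prefix_ray p K) x) \<ge> vnorm x"
    using large by blast
  then obtain d where "K = k + d" using le_Suc_ex by blast
  then have "vnorm (act A B (prefix_ray p K) x) \<le> vnorm (act A B (prefix_ray p k) x)"
    using P x by (simp add: prefix_ray_add act_append vnorm_act_le act_carrier pmodule_carrier)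
  moreover have "vnorm (act A B (prefix_ray p k) x) \<le> vnorm x" by (rule vnorm_act_le[OF P x])
  ultimately show "vnorm (act A B (prefix_ray p k) x) = vnorm x" using K by linarith
qed

section \<open>Prime words and periodic rays\<close>

lemma length_concat_replicate [simp]: "length (concat (replicate k u)) = k * length u"
  by (induct k) auto

lemma nth_concat_replicate:
  "i < k * length u \<Longrightarrow> concat (replicate k u) ! i = u ! (i mod length u)"
proof (induct k arbitrary: i)
  case (Suc k)
  then show ?case
    by (cases "i < length u") (auto simp: nth_append le_mod_geq)
qed simp

lemma concat_replicate_concat_replicate:
  "concat (replicate k (concat (replicate j v))) = concat (replicate (k * j) v)"
  by (induct k) (auto simp: replicate_add)

lemma prime_word_nonempty: "prime_word w \<Longrightarrow> w \<noteq> []"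
  unfolding prime_word_def by (metis concat_replicate_trivial le_refl one_add_one)

lemma prime_root_exists: "w \<noteq> [] \<Longrightarrow> \<exists>u k. prime_word u \<and> k \<ge> 1 \<and> w = concat (replicate k u)"
proof (induct "length w" arbitrary: w rule: less_induct)
  case less
  show ?case
  proof (cases "prime_word w")
    case True
    then show ?thesis by (intro exI[of _ w] exI[of _ 1]) auto
  next
    case False
    then obtain u k where k: "k \<ge> 2" and w: "w = concat (replicate k u)"
      unfolding prime_word_def by auto
    have u: "u \<noteq> []" using less.prems w by auto
    have "length u < length w" using k u w by (simp add: less_le_trans[of _ "2 * length u"])
    from less.hyps[OF this u] obtain v j where "prime_word v" "j \<ge> 1" "u = concat (replicate j v)"
      by auto
    then show ?thesis using w k concat_replicate_concat_replicate[of k j v]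
      by (intro exI[of _ v] exI[of _ "k * j"]) auto
  qed
qed

lemma periodic_mult:
  fixes f :: "nat \<Rightarrow> 'a" and a i t :: nat
  assumes "\<And>i. f (i + a) = f i"
  shows "f (i + t * a) = f i"
proof (induct t)
  case (Suc t)
  have "f (i + Suc t * a) = f ((i + t * a) + a)" by (simp add: ac_simps)
  then show ?case using assms Suc by simp
qed simp

lemma periodic_gcd:
  fixes f :: "nat \<Rightarrow> 'a"
  assumes a: "\<And>i. f (i + a) = f i" and b: "\<And>i. f (i + b) = f i"
  shows "f (i + gcd a b) = f i"
proof (cases "a = 0")
  case True
  then show ?thesis using b by simp
next
  case False
  then obtain x y where xy: "a * x = b * y + gcd a b" using bezout_nat by blast
  have "f (i + gcd a b) = f (i + gcd a b + y * b)" using periodic_mult[of f b, OF b] by metis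
  also have "\<dots> = f (i + x * a)" using xy by (simp add: ac_simps)
  also have "\<dots> = f i" using periodic_mult[of f a, OF a] by metis
  finally show ?thesis .
qed

lemma cyclically_periodic_eq_concat_replicate:
  assumes w: "w \<noteq> []" and dvd: "g dvd length w"
    and per: "\<And>i. w ! ((i + g) mod length w) = w ! (i mod length w)"
  shows "w = concat (replicate (length w div g) (take g w))"
proof (rule nth_equalityI)
  have g: "0 < g" using dvd w by (auto intro: gr0I)
  have g_le: "g \<le> length w" using dvd w by (simp add: dvd_imp_le)
  then show "length w = length (concat (replicate (length w div g) (take g w)))"
    using dvd by (simp add: min_def)
  fix i assume i: "i < length w"
  have small: "i mod g < length w" using g g_le by (meson less_le_trans mod_less_divisor)
  have "concat (replicate (length w div g) (take g w)) ! i = w ! (i mod g)"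
    using i g g_le dvd by (subst nth_concat_replicate) (auto simp: min_def)
  also have "\<dots> = w ! ((i mod g) mod length w)" using small by simp
  also have "\<dots> = w ! ((i mod g + (i div g) * g) mod length w)"
    by (rule periodic_mult[where f = "\<lambda>i. w ! (i mod length w)", symmetric]) (rule per)
  also have "\<dots> = w ! i" using i by simp
  finally show "w ! i = concat (replicate (length w div g) (take g w)) ! i" by simp
qed

text \<open>The rotation makes w periodic with period gcd k |w|; a proper period dividing |w|
  would make w a proper power.\<close>

lemma rotate_prime_word_fixed:
  assumes P: "prime_word w" and R: "rotate k w = w"
  shows "length w dvd k"
proof -
  define d where "d = length w"
  define g where "g = gcd k d"
  have d: "d > 0" using prime_word_nonempty[OF P] by (simp add: d_def)
  have "w ! ((i + k) mod d) = w ! (i mod d)" for i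
    using R nth_rotate[of "i mod d" w k] d by (simp add: d_def mod_add_right_eq add.commute)
  moreover have "w ! ((i + d) mod d) = w ! (i mod d)" for i by simp
  ultimately have per: "w ! ((i + g) mod d) = w ! (i mod d)" for i
    unfolding g_def by (rule periodic_gcd[where f = "\<lambda>i. w ! (i mod d)"])
  have g: "0 < g" "g dvd d" using d by (simp_all add: g_def)
  show ?thesis
  proof (cases "g = d")
    case True
    then show ?thesis by (metis gcd_dvd1 g_def d_def)
  next
    case False
    obtain q where q: "d = g * q" using g by (auto elim: dvdE)
    then have "q \<noteq> 0" "q \<noteq> 1" using d False by auto
    then have "d div g \<ge> 2" using q g by simp
    moreover have "w = concat (replicate (d div g) (take g w))"
      using cyclically_periodic_eq_concat_replicate[OF prime_word_nonempty[OF P], of g] g(2) per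
      by (simp add: d_def)
    ultimately show ?thesis using P unfolding prime_word_def by blast
  qed
qed

lemma rotate_prime_word_inj:
  assumes P: "prime_word w" and i: "i < length w" and j: "j < length w"
    and R: "rotate i w = rotate j w"
  shows "i = j"
proof -
  have "rotate (length w - j + i) w = rotate (length w - j) (rotate i w)"
    by (simp add: rotate_rotate)
  also have "\<dots> = rotate (length w - j + j) w" using R by (simp add: rotate_rotate)
  also have "\<dots> = w" using j by (simp add: rotate_id)
  finally have "length w dvd length w - j + i" by (rule rotate_prime_word_fixed[OF P])
  then obtain q where q: "length w - j + i = length w * q" by (auto elim: dvdE)
  then have "length w * 0 < length w * q" "length w * q < length w * 2" using i j by linarith+
  then have "0 < q" "q < 2" by (simp_all only: mult_less_cancel1)
  then have "q = 1" by simp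
  then show ?thesis using q i j by simp
qed

lemma rotate_eq_iff_nth:
  "length u = length w \<Longrightarrow> w \<noteq> [] \<Longrightarrow>
    u = rotate k w \<longleftrightarrow> (\<forall>t<length w. u ! t = w ! ((k + t) mod length w))"
  by (auto simp: nth_rotate intro: nth_equalityI)

lemma per_ray_rotate: "w \<noteq> [] \<Longrightarrow> per_ray (rotate j w) = shift_ray j (per_ray w)"
  by (auto simp: per_ray_def shift_ray_def nth_rotate mod_add_right_eq add.commute)

lemma per_ray_concat_replicate:
  assumes "k \<ge> 1" "u \<noteq> []"
  shows "per_ray (concat (replicate k u)) = per_ray u"
proof
  fix i
  have "i mod (k * length u) < k * length u" using assms by simp
  then show "per_ray (concat (replicate k u)) i = per_ray u i"
    unfolding per_ray_def by (simp add: nth_concat_replicate mod_mod_cancel)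
qed

lemma prefix_per_ray_mult:
  "r \<noteq> [] \<Longrightarrow> prefix_ray (per_ray r) (k * length r) = concat (replicate k r)"
  by (intro nth_equalityI) (auto simp: per_ray_def nth_concat_replicate)

lemma prefix_per_ray_le: "j \<le> length r \<Longrightarrow> prefix_ray (per_ray r) j = take j r"
  by (intro nth_equalityI) (auto simp: per_ray_def)

lemma shift_per_ray_dvd: "length r dvd c \<Longrightarrow> shift_ray c (per_ray r) = per_ray r"
  by (auto simp: shift_ray_def per_ray_def)

lemma shift_per_ray_inj:
  assumes P: "prime_word r" and i: "i < length r" and j: "j < length r"
    and eq: "shift_ray i (per_ray r) = shift_ray j (per_ray r)"
  shows "i = j"
proof -
  have r: "r \<noteq> []" by (rule prime_word_nonempty[OF P])
  have "rotate i r ! t = rotate j r ! t" if "t < length r" for t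
    using fun_cong[OF eq, of t] that r by (simp add: shift_ray_def per_ray_def nth_rotate add.commute)
  then have "rotate i r = rotate j r" by (intro nth_equalityI) auto
  then show ?thesis by (rule rotate_prime_word_inj[OF P i j])
qed

lemma rep_set_rotate_eq:
  assumes W: "rep_set W" and w: "w \<in> W" and w': "w' \<in> W" and rot: "w = rotate k w'"
  shows "w = w'"
proof -
  have "\<exists>!v. v \<in> W \<and> (\<exists>k. w = rotate k v)" using W w by (simp add: rep_set_def)
  moreover have "w \<in> W \<and> (\<exists>k. w = rotate k w)" using w by (auto intro: exI[of _ 0])
  moreover have "w' \<in> W \<and> (\<exists>k. w = rotate k w')" using w' rot by blast
  ultimately show ?thesis by blast
qed

section \<open>Eigenvalues of matrices with a non-decaying orbit\<close>

lemma smult_mat_mult_vec: "dim_vec v = dim_col T \<Longrightarrow> (a \<cdot>\<^sub>m T) *\<^sub>v v = a \<cdot>\<^sub>v (T *\<^sub>v v)"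
  by (intro eq_vecI) (auto simp: scalar_prod_def sum_distrib_left mult_ac intro!: sum.cong)

lemma pow_smult_mat:
  fixes T :: "'a :: comm_ring_1 mat"
  assumes T: "T \<in> carrier_mat n n"
  shows "(a \<cdot>\<^sub>m T) ^\<^sub>m k = a ^ k \<cdot>\<^sub>m T ^\<^sub>m k"
proof (induct k)
  case (Suc k)
  have Tk: "T ^\<^sub>m k \<in> carrier_mat n n" using T by (rule pow_carrier_mat)
  have "(a \<cdot>\<^sub>m T) ^\<^sub>m Suc k = a ^ k \<cdot>\<^sub>m (T ^\<^sub>m k * (a \<cdot>\<^sub>m T))"
    using Suc mult_smult_assoc_mat[OF Tk smult_carrier_mat[OF T]] by simp
  also have "\<dots> = a ^ Suc k \<cdot>\<^sub>m T ^\<^sub>m Suc k"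
    using T Tk by (auto intro!: eq_matI simp: mult_smult_distrib[OF Tk T])
  finally show ?case .
qed (use T in \<open>auto intro!: eq_matI\<close>)

lemma eigenvector_smult_mat:
  fixes T :: "'a :: field mat"
  assumes T: "T \<in> carrier_mat n n" and a: "a \<noteq> 0" and ev: "eigenvector (a \<cdot>\<^sub>m T) v \<mu>"
  shows "eigenvector T v (\<mu> / a)"
proof -
  have v: "v \<in> carrier_vec n" using ev T by (simp add: eigenvector_def)
  have "a \<cdot>\<^sub>v (T *\<^sub>v v) = \<mu> \<cdot>\<^sub>v v"
    using ev T v by (simp add: eigenvector_def smult_mat_mult_vec)
  then have "(1 / a) \<cdot>\<^sub>v (a \<cdot>\<^sub>v (T *\<^sub>v v)) = (1 / a) \<cdot>\<^sub>v (\<mu> \<cdot>\<^sub>v v)" by simp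
  moreover have "1 / a * a = 1" "1 / a * \<mu> = \<mu> / a" using a by simp_all
  ultimately have "T *\<^sub>v v = (\<mu> / a) \<cdot>\<^sub>v v" by (simp add: smult_smult_assoc)
  then show ?thesis using ev T by (simp add: eigenvector_def)
qed

lemma spectral_radius_smult_le:
  assumes T: "T \<in> carrier_mat n n" and n: "n > 0" and a: "a \<noteq> 0"
  shows "spectral_radius (a \<cdot>\<^sub>m T) \<le> cmod a * spectral_radius T"
proof -
  have S: "a \<cdot>\<^sub>m T \<in> carrier_mat n n" using T by simp
  obtain \<mu> where "\<mu> \<in> spectrum (a \<cdot>\<^sub>m T)" and \<mu>: "spectral_radius (a \<cdot>\<^sub>m T) = cmod \<mu>"
    using spectral_radius_mem_max(1)[OF S n] by auto
  then obtain v where "eigenvector (a \<cdot>\<^sub>m T) v \<mu>" unfolding spectrum_def eigenvalue_def by auto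
  then have "\<mu> / a \<in> spectrum T"
    using eigenvector_smult_mat[OF T a] unfolding spectrum_def eigenvalue_def by auto
  then have "cmod (\<mu> / a) \<le> spectral_radius T"
    by (intro spectral_radius_mem_max(2)[OF T n]) auto
  then have "cmod \<mu> / cmod a \<le> spectral_radius T" by (simp add: norm_divide)
  then show ?thesis using \<mu> a by (simp add: field_simps)
qed

lemma vnorm_mult_mat_vec_le:
  assumes M: "M \<in> carrier_mat m n" and b: "norm_bound M c" and x: "x \<in> carrier_vec n"
  shows "vnorm (M *\<^sub>v x) \<le> m * (c * (\<Sum>j<n. cmod (x $ j)))"
proof -
  have "cmod ((M *\<^sub>v x) $ i) \<le> c * (\<Sum>j<n. cmod (x $ j))" if i: "i < m" for i
  proof -
    have "cmod ((M *\<^sub>v x) $ i) \<le> (\<Sum>j<n. cmod (M $$ (i, j)) * cmod (x $ j))"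
      unfolding mult_mat_vec_index[OF M x i] by (rule order_trans[OF norm_sum]) (simp add: norm_mult)
    also have "\<dots> \<le> (\<Sum>j<n. c * cmod (x $ j))"
      using b M i by (intro sum_mono mult_right_mono) (auto simp: norm_bound_def)
    finally show ?thesis by (simp add: sum_distrib_left)
  qed
  then have "(\<Sum>i<m. cmod ((M *\<^sub>v x) $ i)) \<le> (\<Sum>i<m. c * (\<Sum>j<n. cmod (x $ j)))"
    by (intro sum_mono) simp
  then have "(\<Sum>i<m. cmod ((M *\<^sub>v x) $ i)) \<le> m * (c * (\<Sum>j<n. cmod (x $ j)))" by simp
  then show ?thesis using vnorm_le_sum_cmod[of "M *\<^sub>v x"] M by simp
qed

text \<open>If every eigenvalue had modulus below one, a slightly enlarged multiple s T would
  still have spectral radius below one and hence bounded powers; the powers of T would then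
  decay like s^-k and could not preserve the norm of x.\<close>

lemma eigenvalue_ge_1_if_orbit_isometric:
  fixes T :: "complex mat"
  assumes T: "T \<in> carrier_mat n n" and x: "x \<in> carrier_vec n" "x \<noteq> 0\<^sub>v n"
    and iso: "\<And>k. vnorm (T ^\<^sub>m k *\<^sub>v x) = vnorm x"
  shows "\<exists>lam v. eigenvector T v lam \<and> cmod lam \<ge> 1"
proof (rule ccontr)
  assume "\<not> ?thesis"
  then have small: "eigenvector T v lam \<Longrightarrow> cmod lam < 1" for v lam by force
  have n: "n > 0" using x by (cases n) auto
  define \<rho> where "\<rho> = spectral_radius T"
  obtain l where "l \<in> spectrum T" "\<rho> = cmod l"
    using spectral_radius_mem_max(1)[OF T n] unfolding \<rho>_def by auto
  then have \<rho>: "0 \<le> \<rho>" "\<rho> < 1" using small unfolding spectrum_def eigenvalue_def by auto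
  define s :: real where "s = 2 / (1 + \<rho>)"
  have s: "s > 1" "s * \<rho> < 1" using \<rho> by (simp_all add: s_def field_simps)
  define S where "S = complex_of_real s \<cdot>\<^sub>m T"
  have S: "S \<in> carrier_mat n n" using T by (simp add: S_def)
  have "spectral_radius S \<le> s * \<rho>"
    using spectral_radius_smult_le[OF T n, of "complex_of_real s"] s unfolding S_def \<rho>_def by simp
  then obtain c where c: "\<And>k. norm_bound (S ^\<^sub>m k) c"
    using spectral_radius_jnf_norm_bound_less_1_upper_triangular[OF S] s by force
  define M where "M = (\<Sum>j<n. cmod (x $ j))"
  have bound: "s ^ k * vnorm x \<le> n * (c * M)" for k
  proof -
    have "S ^\<^sub>m k *\<^sub>v x = complex_of_real (s ^ k) \<cdot>\<^sub>v (T ^\<^sub>m k *\<^sub>v x)"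
      using T x by (simp add: S_def pow_smult_mat smult_mat_mult_vec)
    then have "vnorm (S ^\<^sub>m k *\<^sub>v x) = s ^ k * vnorm x"
      using s iso by (simp add: vnorm_smult norm_power)
    then show ?thesis
      using vnorm_mult_mat_vec_le[OF pow_carrier_mat[OF S, of k] c x(1)] by (simp add: M_def)
  qed
  have "vnorm x > 0" using vnorm_pos x by blast
  moreover obtain k where "n * (c * M) / vnorm x < s ^ k" using real_arch_pow[OF s(1)] by blast
  ultimately show False using bound[of k] by (simp add: field_simps)
qed

section \<open>The P-modules m_{w,phi}\<close>

text \<open>(mw_A w phi, mw_B w phi, C^|w|) is the module m_{w,phi}; phase d phi k is the k-th
  diagonal entry of D_phi.\<close>

definition mw_A :: "bool list \<Rightarrow> complex \<Rightarrow> complex mat" where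
  "mw_A w \<phi> = A_w w * D_phi (length w) \<phi>"

definition mw_B :: "bool list \<Rightarrow> complex \<Rightarrow> complex mat" where
  "mw_B w \<phi> = B_w w * D_phi (length w) \<phi>"

definition phase :: "nat \<Rightarrow> complex \<Rightarrow> nat \<Rightarrow> complex" where
  "phase d \<phi> k = (if k = d - 1 then \<phi> else 1)"

lemma mw_A_carrier [simp]: "mw_A w \<phi> \<in> carrier_mat (length w) (length w)"
  unfolding mw_A_def A_w_def D_phi_def by (rule mult_carrier_mat[OF mat_carrier mat_carrier])

lemma mw_B_carrier [simp]: "mw_B w \<phi> \<in> carrier_mat (length w) (length w)"
  unfolding mw_B_def B_w_def D_phi_def by (rule mult_carrier_mat[OF mat_carrier mat_carrier])

lemma dim_mw [simp]:
  "dim_row (mw_A w \<phi>) = length w" "dim_col (mw_A w \<phi>) = length w"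
  "dim_row (mw_B w \<phi>) = length w" "dim_col (mw_B w \<phi>) = length w"
  using mw_A_carrier mw_B_carrier by (metis carrier_matD)+

lemma cmod_phase: "cmod \<phi> = 1 \<Longrightarrow> cmod (phase d \<phi> k) = 1"
  by (simp add: phase_def)

lemma mult_D_phi_index:
  assumes X: "X \<in> carrier_mat d d" and j: "j < d" and k: "k < d"
  shows "(X * D_phi d \<phi>) $$ (j, k) = X $$ (j, k) * phase d \<phi> k"
proof -
  have "(X * D_phi d \<phi>) $$ (j, k) = (\<Sum>l<d. X $$ (j, l) * D_phi d \<phi> $$ (l, k))"
    using X j k by (simp add: D_phi_def scalar_prod_def atLeast0LessThan)
  also have "\<dots> = (\<Sum>l<d. if l = k then X $$ (j, k) * phase d \<phi> k else 0)"
    using k by (intro sum.cong) (auto simp: D_phi_def phase_def)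
  finally show ?thesis using k by simp
qed

lemma mw_letter_index:
  assumes "j < length w" "k < length w"
  shows "letter_mat (mw_A w \<phi>) (mw_B w \<phi>) b $$ (j, k) =
    (if j = Suc k mod length w \<and> w ! k = b then phase (length w) \<phi> k else 0)"
proof -
  have "A_w w \<in> carrier_mat (length w) (length w)" "B_w w \<in> carrier_mat (length w) (length w)"
    unfolding A_w_def B_w_def by (rule mat_carrier)+
  then show ?thesis
    using assms
    by (cases b) (simp_all add: letter_mat_def mw_A_def mw_B_def mult_D_phi_index, simp_all add: A_w_def B_w_def)
qed

lemma mw_letter_unit_vec:
  assumes k: "k < length w"
  shows "letter_mat (mw_A w \<phi>) (mw_B w \<phi>) b *\<^sub>v unit_vec (length w) k =
    (if w ! k = b then phase (length w) \<phi> k \<cdot>\<^sub>v unit_vec (length w) (Suc k mod length w)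
     else 0\<^sub>v (length w))"
proof (rule eq_vecI)
  fix j assume "j < dim_vec (if w ! k = b
      then phase (length w) \<phi> k \<cdot>\<^sub>v unit_vec (length w) (Suc k mod length w) else 0\<^sub>v (length w))"
  then have j: "j < length w" by (auto split: if_splits)
  have "Suc k mod length w < length w" using k by (intro mod_less_divisor) arith
  then show "(letter_mat (mw_A w \<phi>) (mw_B w \<phi>) b *\<^sub>v unit_vec (length w) k) $ j =
    (if w ! k = b then phase (length w) \<phi> k \<cdot>\<^sub>v unit_vec (length w) (Suc k mod length w)
     else 0\<^sub>v (length w)) $ j"
    using mult_mat_vec_unit_vec[OF letter_mat_carrier[OF mw_A_carrier mw_B_carrier] k j]
      mw_letter_index[OF j k] j by auto
qed (auto simp: letter_mat_def)

lemma adj_mult_self_index_cyclic: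
  fixes X :: "complex mat"
  assumes X: "X \<in> carrier_mat d d" and i: "i < d" and k: "k < d"
    and X_index: "\<And>j k. j < d \<Longrightarrow> k < d \<Longrightarrow> X $$ (j, k) = (if j = Suc k mod d \<and> P k then c k else 0)"
  shows "(adj X * X) $$ (i, k) = (if i = k \<and> P k then cnj (c k) * c k else 0)"
proof -
  have "Suc i mod d = (if Suc i = d then 0 else Suc i)" "Suc k mod d = (if Suc k = d then 0 else Suc k)"
    using i k by auto
  then have Suc_mod_inj: "Suc i mod d = Suc k mod d \<longleftrightarrow> i = k" by auto
  have "(adj X * X) $$ (i, k) = (\<Sum>j<d. cnj (X $$ (j, i)) * X $$ (j, k))"
    using X i k by (simp add: adj_def scalar_prod_def atLeast0LessThan)
  also have "\<dots> = (\<Sum>j<d. if j = Suc k mod d then (if i = k \<and> P k then cnj (c k) * c k else 0) else 0)"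
    using i k Suc_mod_inj by (intro sum.cong) (auto simp: X_index)
  also have "\<dots> = (if i = k \<and> P k then cnj (c k) * c k else 0)" using k by simp
  finally show ?thesis .
qed

lemma mw_pmodule:
  assumes \<phi>: "cmod \<phi> = 1"
  shows "pmodule (length w) (mw_A w \<phi>) (mw_B w \<phi>)"
  unfolding pmodule_def
proof (intro conjI)
  let ?d = "length w"
  show "adj (mw_A w \<phi>) * mw_A w \<phi> + adj (mw_B w \<phi>) * mw_B w \<phi> = 1\<^sub>m ?d"
  proof (rule eq_matI)
    fix i k assume "i < dim_row (1\<^sub>m ?d :: complex mat)" "k < dim_col (1\<^sub>m ?d :: complex mat)"
    then have i: "i < ?d" and k: "k < ?d" by auto
    have "(adj (mw_A w \<phi>) * mw_A w \<phi>) $$ (i, k) =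
        (if i = k \<and> \<not> w ! k then cnj (phase ?d \<phi> k) * phase ?d \<phi> k else 0)"
      using mw_letter_index[of _ w _ \<phi> False]
      by (intro adj_mult_self_index_cyclic[OF mw_A_carrier i k]) (simp add: letter_mat_def)
    moreover have "(adj (mw_B w \<phi>) * mw_B w \<phi>) $$ (i, k) =
        (if i = k \<and> w ! k then cnj (phase ?d \<phi> k) * phase ?d \<phi> k else 0)"
      using mw_letter_index[of _ w _ \<phi> True]
      by (intro adj_mult_self_index_cyclic[OF mw_B_carrier i k]) (simp add: letter_mat_def)
    moreover have "cnj (phase ?d \<phi> k) * phase ?d \<phi> k = 1"
      using cmod_phase[OF \<phi>] by (metis complex_norm_square mult.commute of_real_1 power_one)
    ultimately show "(adj (mw_A w \<phi>) * mw_A w \<phi> + adj (mw_B w \<phi>) * mw_B w \<phi>) $$ (i, k) = 1\<^sub>m ?d $$ (i, k)"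
      using i k by simp
  qed auto
qed auto

definition reads_at :: "bool list \<Rightarrow> nat \<Rightarrow> bool list \<Rightarrow> bool" where
  "reads_at w k u \<longleftrightarrow> (\<forall>t<length u. u ! t = w ! ((k + t) mod length w))"

definition phase_along :: "bool list \<Rightarrow> complex \<Rightarrow> nat \<Rightarrow> bool list \<Rightarrow> complex" where
  "phase_along w \<phi> k u = (\<Prod>t<length u. phase (length w) \<phi> ((k + t) mod length w))"

lemma reads_at_Cons:
  assumes "k < length w"
  shows "reads_at w k (b # u) \<longleftrightarrow> w ! k = b \<and> reads_at w (Suc k mod length w) u"
proof -
  have "(Suc k mod length w + t) mod length w = (k + Suc t) mod length w" for t
    by (simp add: mod_add_left_eq)
  then show ?thesis unfolding reads_at_def using assms by (auto simp: All_less_Suc2)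
qed

lemma phase_along_Cons:
  assumes "k < length w"
  shows "phase_along w \<phi> k (b # u) = phase (length w) \<phi> k * phase_along w \<phi> (Suc k mod length w) u"
proof -
  have "(Suc k mod length w + t) mod length w = (k + Suc t) mod length w" for t
    by (simp add: mod_add_left_eq)
  then show ?thesis
    unfolding phase_along_def length_Cons prod.lessThan_Suc_shift using assms
    by (simp del: prod.lessThan_Suc)
qed

lemma cmod_phase_along: "cmod \<phi> = 1 \<Longrightarrow> cmod (phase_along w \<phi> k u) = 1"
  by (simp add: phase_along_def prod_norm[symmetric] cmod_phase)

lemma mw_act_unit_vec:
  assumes "k < length w"
  shows "act (mw_A w \<phi>) (mw_B w \<phi>) u (unit_vec (length w) k) =
    (if reads_at w k u then phase_along w \<phi> k u \<cdot>\<^sub>v unit_vec (length w) ((k + length u) mod length w)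
     else 0\<^sub>v (length w))"
  using assms
proof (induct u arbitrary: k)
  case Nil
  then show ?case by (auto simp: reads_at_def phase_along_def)
next
  case (Cons b u)
  let ?d = "length w" and ?k' = "Suc k mod length w"
  have k': "?k' < ?d" using Cons.prems by (intro mod_less_divisor) arith
  have idx: "(?k' + length u) mod ?d = (k + length (b # u)) mod ?d" by (simp add: mod_add_left_eq)
  show ?case
  proof (cases "w ! k = b")
    case True
    have "act (mw_A w \<phi>) (mw_B w \<phi>) (b # u) (unit_vec ?d k)
        = phase ?d \<phi> k \<cdot>\<^sub>v act (mw_A w \<phi>) (mw_B w \<phi>) u (unit_vec ?d ?k')"
      using mw_letter_unit_vec[OF Cons.prems, of \<phi> b] True
      by (simp add: act_smult[OF mw_A_carrier mw_B_carrier unit_vec_carrier])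
    then show ?thesis
      unfolding Cons.hyps[OF k'] reads_at_Cons[OF Cons.prems] phase_along_Cons[OF Cons.prems] idx
      using True by (auto simp: smult_smult_assoc)
  next
    case False
    then show ?thesis
      using mw_letter_unit_vec[OF Cons.prems, of \<phi> b] reads_at_Cons[OF Cons.prems]
      by (simp add: act_zero[OF mw_A_carrier mw_B_carrier])
  qed
qed

lemma reads_at_rotate:
  assumes P: "prime_word w" and i: "i < length w" and k: "k < length w"
  shows "reads_at w k (rotate i w) \<longleftrightarrow> k = i"
proof -
  have "reads_at w k (rotate i w) \<longleftrightarrow> rotate i w = rotate k w"
    unfolding reads_at_def using rotate_eq_iff_nth[of "rotate i w" w k] prime_word_nonempty[OF P] by simp
  also have "\<dots> \<longleftrightarrow> k = i" using rotate_prime_word_inj[OF P i k] by auto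
  finally show ?thesis .
qed

text \<open>Since w is prime, e_i is the only basis vector that survives the word rotate i w.\<close>

lemma mw_act_rotate:
  assumes P: "prime_word w" and i: "i < length w" and x: "x \<in> carrier_vec (length w)"
  shows "act (mw_A w \<phi>) (mw_B w \<phi>) (rotate i w) x
    = (phase_along w \<phi> i (rotate i w) * x $ i) \<cdot>\<^sub>v unit_vec (length w) i"
proof (rule eq_vecI)
  let ?d = "length w" and ?u = "rotate i w"
  let ?M = "word_mat ?d (mw_A w \<phi>) (mw_B w \<phi>) ?u"
  have M: "?M \<in> carrier_mat ?d ?d" by simp
  have act: "act (mw_A w \<phi>) (mw_B w \<phi>) ?u y = ?M *\<^sub>v y" if "y \<in> carrier_vec ?d" for y
    by (rule act_eq_word_mat[OF mw_A_carrier mw_B_carrier that])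
  show "dim_vec (act (mw_A w \<phi>) (mw_B w \<phi>) ?u x) = dim_vec ((phase_along w \<phi> i ?u * x $ i) \<cdot>\<^sub>v unit_vec ?d i)"
    using act[OF x] M by simp
  fix j assume "j < dim_vec ((phase_along w \<phi> i ?u * x $ i) \<cdot>\<^sub>v unit_vec ?d i)"
  then have j: "j < ?d" by simp
  have "?M *\<^sub>v unit_vec ?d k = (if k = i then phase_along w \<phi> i ?u \<cdot>\<^sub>v unit_vec ?d i else 0\<^sub>v ?d)"
    if k: "k < ?d" for k
    using act[of "unit_vec ?d k"] mw_act_unit_vec[OF k] reads_at_rotate[OF P i k] i by auto
  then have "(?M *\<^sub>v x) $ j = (\<Sum>k<?d. if k = i then (phase_along w \<phi> i ?u \<cdot>\<^sub>v unit_vec ?d i) $ j * x $ i else 0)"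
    unfolding mult_mat_vec_index_unit_vecs[OF M x j] using j by (intro sum.cong) auto
  then show "act (mw_A w \<phi>) (mw_B w \<phi>) ?u x $ j = ((phase_along w \<phi> i ?u * x $ i) \<cdot>\<^sub>v unit_vec ?d i) $ j"
    using act[OF x] i j by simp
qed

lemma submodule_act_closed: "Defs.submodule n A B V \<Longrightarrow> x \<in> V \<Longrightarrow> act A B u x \<in> V"
proof (induct u arbitrary: x)
  case (Cons b u)
  then have "letter_mat A B b *\<^sub>v x \<in> V" by (cases b) (auto simp: Defs.submodule_def letter_mat_def)
  then show ?case using Cons by simp
qed simp

lemma csubspace_smult_cancel:
  assumes V: "csubspace n V" and c: "c \<noteq> 0" and cx: "c \<cdot>\<^sub>v x \<in> V"
  shows "x \<in> V"
proof -
  have "(1 / c) \<cdot>\<^sub>v (c \<cdot>\<^sub>v x) \<in> V" using V cx by (simp add: csubspace_def)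
  moreover have "1 / c * c = 1" using c by simp
  ultimately show ?thesis by (simp add: smult_smult_assoc)
qed

lemma mw_submodule_unit_vec:
  assumes \<phi>: "cmod \<phi> = 1" and S: "Defs.submodule (length w) (mw_A w \<phi>) (mw_B w \<phi>) V"
    and i: "i < length w" and ei: "unit_vec (length w) i \<in> V"
  shows "carrier_vec (length w) \<subseteq> V"
proof -
  let ?d = "length w"
  have V: "csubspace ?d V" using S by (simp add: Defs.submodule_def)
  have "unit_vec ?d ((i + t) mod ?d) \<in> V" for t
  proof (induct t)
    case (Suc t)
    let ?j = "(i + t) mod ?d"
    have j: "?j < ?d" using i by (intro mod_less_divisor) arith
    have "letter_mat (mw_A w \<phi>) (mw_B w \<phi>) (w ! ?j) *\<^sub>v unit_vec ?d ?j \<in> V"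
      using S Suc by (auto simp: Defs.submodule_def letter_mat_def)
    then have "phase ?d \<phi> ?j \<cdot>\<^sub>v unit_vec ?d (Suc ?j mod ?d) \<in> V" using mw_letter_unit_vec[OF j] by simp
    moreover have "phase ?d \<phi> ?j \<noteq> 0" using cmod_phase[OF \<phi>, of ?d ?j] by auto
    ultimately have "unit_vec ?d (Suc ?j mod ?d) \<in> V" by (rule csubspace_smult_cancel[OF V, rotated])
    then show ?case by (simp add: mod_Suc_eq)
  qed (use ei i in simp)
  moreover have "(i + (?d - i + k)) mod ?d = k" if "k < ?d" for k
    using that i by simp
  ultimately have "unit_vec ?d k \<in> V" if "k < ?d" for k
    using that by metis
  then show ?thesis by (rule carrier_vec_subset_csubspace[OF V])
qed

lemma mw_irreducible:
  assumes P: "prime_word w" and \<phi>: "cmod \<phi> = 1"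
  shows "irreducible_pmod (length w) (mw_A w \<phi>) (mw_B w \<phi>)"
  unfolding irreducible_pmod_def irred_sub_def
proof (intro conjI allI impI)
  let ?d = "length w"
  show "Defs.submodule ?d (mw_A w \<phi>) (mw_B w \<phi>) (carrier_vec ?d)"
    unfolding Defs.submodule_def
    using csubspace_carrier_vec mult_mat_vec_carrier[OF mw_A_carrier] mult_mat_vec_carrier[OF mw_B_carrier]
    by blast
  show "carrier_vec ?d \<noteq> {0\<^sub>v ?d :: complex vec}"
    using prime_word_nonempty[OF P] unit_vec_carrier unit_vec_nonzero by blast
  fix V assume "Defs.submodule ?d (mw_A w \<phi>) (mw_B w \<phi>) V \<and> V \<subseteq> carrier_vec ?d"
  then have S: "Defs.submodule ?d (mw_A w \<phi>) (mw_B w \<phi>) V" and VC: "V \<subseteq> carrier_vec ?d" by auto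
  have V: "csubspace ?d V" using S by (simp add: Defs.submodule_def)
  show "V = {0\<^sub>v ?d} \<or> V = carrier_vec ?d"
  proof (cases "V = {0\<^sub>v ?d}")
    case False
    then obtain x where xV: "x \<in> V" and x0: "x \<noteq> 0\<^sub>v ?d" using V by (auto simp: csubspace_def)
    have x: "x \<in> carrier_vec ?d" using xV VC by auto
    obtain i where i: "i < ?d" and xi: "x $ i \<noteq> 0"
    proof (rule ccontr)
      assume "\<not> thesis"
      then have "x = 0\<^sub>v ?d" using that x by (intro eq_vecI) auto
      then show False using x0 by simp
    qed
    have "act (mw_A w \<phi>) (mw_B w \<phi>) (rotate i w) x \<in> V" by (rule submodule_act_closed[OF S xV])
    then have "(phase_along w \<phi> i (rotate i w) * x $ i) \<cdot>\<^sub>v unit_vec ?d i \<in> V"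
      using mw_act_rotate[OF P i x] by simp
    moreover have "phase_along w \<phi> i (rotate i w) * x $ i \<noteq> 0"
      using xi cmod_phase_along[OF \<phi>, of w i "rotate i w"] by auto
    ultimately have "unit_vec ?d i \<in> V" by (rule csubspace_smult_cancel[OF V, rotated])
    then show ?thesis using mw_submodule_unit_vec[OF \<phi> S i] VC by blast
  qed simp
qed

lemma Hcomp_irreducible:
  assumes "irreducible_pmod n A B"
  shows "Hcomp n A B = carrier_vec n"
proof
  have "\<Union> {M. irred_sub n A B M} \<subseteq> carrier_vec n"
    by (auto simp: irred_sub_def Defs.submodule_def csubspace_def)
  then show "Hcomp n A B \<subseteq> carrier_vec n" unfolding Hcomp_def by (rule cspan_subset_carrier_vec)
  have "carrier_vec n \<subseteq> \<Union> {M. irred_sub n A B M}"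
    using assms unfolding irreducible_pmod_def by blast
  then show "carrier_vec n \<subseteq> Hcomp n A B" unfolding Hcomp_def using cspan_superset by blast
qed

lemma mw_contained:
  assumes \<phi>: "cmod \<phi> = 1" and k: "k < length w"
  shows "contained (length w) (mw_A w \<phi>) (mw_B w \<phi>) (unit_vec (length w) k) (shift_ray k (per_ray w))"
  unfolding contained_iff_isometric_along isometric_along_def
proof (intro conjI allI)
  fix t
  have "reads_at w k (prefix_ray (shift_ray k (per_ray w)) t)"
    unfolding reads_at_def by (simp add: shift_ray_def per_ray_def add.commute)
  moreover have "(k + t) mod length w < length w" using k by (intro mod_less_divisor) arith
  ultimately show "vnorm (act (mw_A w \<phi>) (mw_B w \<phi>) (prefix_ray (shift_ray k (per_ray w)) t)
      (unit_vec (length w) k)) = vnorm (unit_vec (length w) k)"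
    unfolding mw_act_unit_vec[OF k] using k by (simp add: vnorm_smult vnorm_unit_vec cmod_phase_along[OF \<phi>])
qed (use k in auto)

lemma mw_Hatom_ray:
  assumes P: "prime_word w" and \<phi>: "cmod \<phi> = 1"
  shows "Hatom_ray (length w) (mw_A w \<phi>) (mw_B w \<phi>) (per_ray w) = carrier_vec (length w)"
proof -
  let ?d = "length w"
  have w: "w \<noteq> []" by (rule prime_word_nonempty[OF P])
  have Hcomp: "Hcomp ?d (mw_A w \<phi>) (mw_B w \<phi>) = carrier_vec ?d"
    by (rule Hcomp_irreducible[OF mw_irreducible[OF P \<phi>]])
  have "Hatom ?d (mw_A w \<phi>) (mw_B w \<phi>) = carrier_vec ?d"
    unfolding Hatom_def Hcomp
  proof (rule cspan_eq_carrier_vecI)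
    fix k assume k: "k < ?d"
    then have "contained ?d (mw_A w \<phi>) (mw_B w \<phi>) (unit_vec ?d k) (per_ray (rotate k w))"
      using mw_contained[OF \<phi> k] per_ray_rotate[OF w] by simp
    then show "unit_vec ?d k \<in> {\<xi> \<in> carrier_vec ?d. \<exists>u. u \<noteq> [] \<and>
        contained ?d (mw_A w \<phi>) (mw_B w \<phi>) \<xi> (per_ray u)}"
      using w by (auto intro!: exI[of _ "rotate k w"])
  qed auto
  then show ?thesis
    unfolding Hatom_ray_def using mw_contained[OF \<phi>] by (intro cspan_eq_carrier_vecI) auto
qed

lemma mat_trace_mw_word_mat:
  assumes w: "w \<noteq> []"
  shows "mat_trace (word_mat (length w) (mw_A w \<phi>) (mw_B w \<phi>) u) =
    (\<Sum>k<length w. if reads_at w k u \<and> (k + length u) mod length w = k then phase_along w \<phi> k u else 0)"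
  unfolding mat_trace_unit_vecs[OF word_mat_carrier[OF mw_A_carrier mw_B_carrier]]
proof (rule sum.cong[OF refl])
  fix k assume "k \<in> {..<length w}"
  then have k: "k < length w" by simp
  have "word_mat (length w) (mw_A w \<phi>) (mw_B w \<phi>) u *\<^sub>v unit_vec (length w) k =
      act (mw_A w \<phi>) (mw_B w \<phi>) u (unit_vec (length w) k)"
    by (rule act_eq_word_mat[OF mw_A_carrier mw_B_carrier unit_vec_carrier, symmetric])
  then show "(word_mat (length w) (mw_A w \<phi>) (mw_B w \<phi>) u *\<^sub>v unit_vec (length w) k) $ k =
      (if reads_at w k u \<and> (k + length u) mod length w = k then phase_along w \<phi> k u else 0)"
    using k w by (simp add: mw_act_unit_vec[OF k])
qed

lemma mat_trace_mw_own_word: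
  assumes P: "prime_word w"
  shows "mat_trace (word_mat (length w) (mw_A w \<phi>) (mw_B w \<phi>) w) = \<phi>"
proof -
  have w: "w \<noteq> []" by (rule prime_word_nonempty[OF P])
  then have d: "length w > 0" by simp
  have "reads_at w k w \<longleftrightarrow> k = 0" if "k < length w" for k
    using reads_at_rotate[OF P d that] by simp
  then have "mat_trace (word_mat (length w) (mw_A w \<phi>) (mw_B w \<phi>) w) =
      (\<Sum>k<length w. if k = 0 then phase_along w \<phi> 0 w else 0)"
    unfolding mat_trace_mw_word_mat[OF w] by (intro sum.cong) auto
  also have "\<dots> = phase_along w \<phi> 0 w" using d by simp
  also have "\<dots> = (\<Prod>t<length w. if t = length w - 1 then \<phi> else 1)"
    unfolding phase_along_def phase_def by (intro prod.cong) auto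
  also have "\<dots> = \<phi>" using d by simp
  finally show ?thesis .
qed

lemma mw_unit_equiv_iff:
  assumes W: "rep_set W" and w: "w \<in> W" and w': "w' \<in> W" and \<phi>: "\<phi> \<noteq> 0"
  shows "unit_equiv (length w) (mw_A w \<phi>) (mw_B w \<phi>) (length w') (mw_A w' \<phi>') (mw_B w' \<phi>')
    \<longleftrightarrow> (w, \<phi>) = (w', \<phi>')"
proof
  assume "(w, \<phi>) = (w', \<phi>')"
  then show "unit_equiv (length w) (mw_A w \<phi>) (mw_B w \<phi>) (length w') (mw_A w' \<phi>') (mw_B w' \<phi>')"
    unfolding unit_equiv_def by (intro bexI[of _ "1\<^sub>m (length w)"]) auto
next
  let ?M' = "word_mat (length w') (mw_A w' \<phi>') (mw_B w' \<phi>') w"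
  have P: "prime_word w" "prime_word w'" using W w w' by (auto simp: rep_set_def)
  have w'_ne: "w' \<noteq> []" by (rule prime_word_nonempty[OF P(2)])
  assume "unit_equiv (length w) (mw_A w \<phi>) (mw_B w \<phi>) (length w') (mw_A w' \<phi>') (mw_B w' \<phi>')"
  note invariant = unit_equiv_mat_trace_word_mat[OF this mw_A_carrier mw_B_carrier mw_A_carrier mw_B_carrier]
  have len: "length w = length w'" by (rule invariant(1))
  have trace: "mat_trace ?M' = \<phi>" using invariant(2)[of w] by (simp add: mat_trace_mw_own_word[OF P(1)])
  have "\<exists>k<length w'. reads_at w' k w"
  proof (rule ccontr)
    assume "\<not> ?thesis"
    then have "mat_trace ?M' = 0" unfolding mat_trace_mw_word_mat[OF w'_ne] by (intro sum.neutral) auto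
    then show False using trace \<phi> by simp
  qed
  then obtain k where "reads_at w' k w" by blast
  then have "w = rotate k w'" using rotate_eq_iff_nth[OF len w'_ne] len by (simp add: reads_at_def)
  then have "w = w'" by (rule rep_set_rotate_eq[OF W w w'])
  moreover have "\<phi>' = \<phi>" using trace mat_trace_mw_own_word[OF P(2)] \<open>w = w'\<close> by simp
  ultimately show "(w, \<phi>) = (w', \<phi>')" by simp
qed

section \<open>Atomic irreducible P-modules\<close>

text \<open>The orbit of eta under the prefixes of r is an orthonormal basis in which the
  P-module becomes m_{r,lam}.\<close>

locale periodic_unit_eigenvector =
  fixes n :: nat and A B :: "complex mat" and r :: "bool list" and lam :: complex
    and eta :: "complex vec"
  assumes pmodule: "pmodule n A B" and irreducible: "irreducible_pmod n A B"
    and prime: "prime_word r"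
    and eta: "eta \<in> carrier_vec n" and vnorm_eta: "vnorm eta = 1"
    and isometric: "isometric_along A B eta (per_ray r)"
    and eigen: "act A B r eta = lam \<cdot>\<^sub>v eta"
begin

abbreviation m :: nat where "m \<equiv> length r"

definition orbit :: "nat \<Rightarrow> complex vec" where
  "orbit j = act A B (prefix_ray (per_ray r) j) eta"

definition U :: "complex mat" where
  "U = mat m n (\<lambda>(j, i). cnj (orbit j $ i))"

lemma A_carrier: "A \<in> carrier_mat n n" and B_carrier: "B \<in> carrier_mat n n"
  using pmodule by (simp_all add: pmodule_carrier)

lemma m_pos: "m > 0"
  using prime_word_nonempty[OF prime] by simp

lemma orbit_carrier: "orbit j \<in> carrier_vec n"
  unfolding orbit_def by (rule act_carrier[OF A_carrier B_carrier eta])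

lemma vnorm_orbit: "vnorm (orbit j) = 1"
  using isometric vnorm_eta unfolding isometric_along_def orbit_def by simp

lemma orbit_isometric: "isometric_along A B (orbit j) (shift_ray j (per_ray r))"
  unfolding orbit_def by (rule isometric_along_act_prefix[OF isometric])

lemma orbit_0: "orbit 0 = eta"
  by (simp add: orbit_def prefix_ray_def)

lemma orbit_m: "orbit m = lam \<cdot>\<^sub>v eta"
  unfolding orbit_def prefix_per_ray_le[OF le_refl] using eigen by simp

lemma letter_mat_orbit:
  assumes k: "k < m"
  shows "letter_mat A B b *\<^sub>v orbit k = (if r ! k = b then phase m lam k \<cdot>\<^sub>v orbit (Suc k mod m) else 0\<^sub>v n)"
proof (cases "r ! k = b")
  case True
  have "letter_mat A B b *\<^sub>v orbit k = orbit (Suc k)"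
    using True k by (simp add: orbit_def prefix_ray_Suc act_snoc per_ray_def)
  also have "\<dots> = phase m lam k \<cdot>\<^sub>v orbit (Suc k mod m)"
    using k orbit_m orbit_0 by (cases "Suc k = m") (auto simp: phase_def)
  finally show ?thesis using True by simp
next
  case False
  then have "b = (\<not> shift_ray k (per_ray r) 0)" using k by (auto simp: shift_ray_def per_ray_def)
  then show ?thesis
    using isometric_along_first_letter(1)[OF pmodule orbit_carrier orbit_isometric] False by simp
qed

lemma orbit_orthonormal:
  assumes i: "i < m" and j: "j < m"
  shows "orbit i \<bullet>c orbit j = (if i = j then 1 else 0)"
proof (cases "i = j")
  case True
  then show ?thesis using cscalar_prod_self vnorm_orbit by simp
next
  case False
  then have "shift_ray i (per_ray r) \<noteq> shift_ray j (per_ray r)"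
    using shift_per_ray_inj[OF prime i j] by blast
  then show ?thesis
    using isometric_along_orthogonal[OF pmodule orbit_carrier orbit_carrier orbit_isometric orbit_isometric]
      False by simp
qed

text \<open>The span of the orbit is a non-zero sub-module, hence everything by irreducibility.\<close>

lemma cspan_orbit: "cspan n (orbit ` {..<m}) = carrier_vec n"
proof -
  let ?V = "cspan n (orbit ` {..<m})"
  have gens: "orbit ` {..<m} \<subseteq> carrier_vec n" using orbit_carrier by auto
  have V: "csubspace n ?V" by (rule csubspace_cspan[OF gens])
  have orbit_V: "orbit j \<in> ?V" if "j < m" for j
    using that cspan_superset[of "orbit ` {..<m}" n] by auto
  have closed: "?V \<subseteq> {x \<in> carrier_vec n. letter_mat A B b *\<^sub>v x \<in> ?V}" for b
  proof (rule cspan_least[OF csubspace_preimage[OF letter_mat_carrier[OF A_carrier B_carrier] V]])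
    have "letter_mat A B b *\<^sub>v orbit k \<in> ?V" if "k < m" for k
      using V letter_mat_orbit[OF that] orbit_V[of "Suc k mod m"] m_pos by (simp add: csubspace_def)
    then show "orbit ` {..<m} \<subseteq> {x \<in> carrier_vec n. letter_mat A B b *\<^sub>v x \<in> ?V}"
      using orbit_carrier by auto
  qed
  have "Defs.submodule n A B ?V"
    using V closed[of False] closed[of True] unfolding Defs.submodule_def letter_mat_def by auto
  moreover have "?V \<subseteq> carrier_vec n" by (rule cspan_subset_carrier_vec[OF gens])
  moreover have "eta \<in> ?V" using orbit_V[OF m_pos] orbit_0 by simp
  moreover have "eta \<noteq> 0\<^sub>v n" using vnorm_eta vnorm_eq_0_iff[OF eta] by simp
  ultimately show ?thesis
    using irreducible unfolding irreducible_pmod_def irred_sub_def by blast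
qed

lemma U_carrier: "U \<in> carrier_mat m n"
  by (simp add: U_def)

lemma U_mult_vec_index: "y \<in> carrier_vec n \<Longrightarrow> j < m \<Longrightarrow> (U *\<^sub>v y) $ j = y \<bullet>c orbit j"
  using orbit_carrier[of j]
  by (auto simp: U_def mult_mat_vec_index[OF U_carrier] scalar_prod_def atLeast0LessThan mult.commute
      intro!: sum.cong)

lemma U_orbit:
  assumes k: "k < m"
  shows "U *\<^sub>v orbit k = unit_vec m k"
proof (rule eq_vecI)
  fix j assume "j < dim_vec (unit_vec m k :: complex vec)"
  then show "(U *\<^sub>v orbit k) $ j = unit_vec m k $ j"
    using k U_mult_vec_index[OF orbit_carrier] orbit_orthonormal by (simp del: index_mult_mat_vec)
qed (use U_carrier in simp)

lemma adj_U_unit_vec: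
  assumes k: "k < m"
  shows "adj U *\<^sub>v unit_vec m k = orbit k"
proof (rule eq_vecI)
  fix i assume "i < dim_vec (orbit k)"
  then have i: "i < n" using orbit_carrier[of k] by simp
  show "(adj U *\<^sub>v unit_vec m k) $ i = orbit k $ i"
    using mult_mat_vec_unit_vec[OF adj_carrier[OF U_carrier] k i] k i by (simp add: adj_def U_def)
qed (use U_carrier orbit_carrier[of k] in simp)

lemma U_adj_U: "U * adj U = 1\<^sub>m m"
  using U_carrier
  by (intro mat_eqI_unit_vecs[of _ m m]) (auto simp: assoc_mult_mat_vec[of _ m n _ m] adj_U_unit_vec U_orbit)

lemma adj_U_U: "adj U * U = 1\<^sub>m n"
proof -
  let ?F = "{x \<in> carrier_vec n. (adj U * U) *\<^sub>v x = 1\<^sub>m n *\<^sub>v x}"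
  have F: "csubspace n ?F" by (rule csubspace_equalizer) (use U_carrier in auto)
  have "orbit ` {..<m} \<subseteq> ?F"
    using U_carrier orbit_carrier by (auto simp: assoc_mult_mat_vec[of _ n m _ n] U_orbit adj_U_unit_vec)
  then have "cspan n (orbit ` {..<m}) \<subseteq> ?F" by (rule cspan_least[OF F])
  then have F_all: "carrier_vec n \<subseteq> ?F" by (simp only: cspan_orbit)
  show ?thesis
  proof (rule mat_eqI_unit_vecs[of _ n n])
    fix k assume "k < n"
    show "(adj U * U) *\<^sub>v unit_vec n k = 1\<^sub>m n *\<^sub>v unit_vec n k"
      using F_all unit_vec_carrier by blast
  qed (use U_carrier in auto)
qed

lemma m_eq_n: "m = n"
  by (rule unitary_dim_eq[OF U_carrier adj_U_U U_adj_U])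

lemma U_intertwines: "U * letter_mat A B b = letter_mat (mw_A r lam) (mw_B r lam) b * U"
proof -
  let ?X = "letter_mat A B b" and ?X' = "letter_mat (mw_A r lam) (mw_B r lam) b"
  have X: "?X \<in> carrier_mat n n" by (rule letter_mat_carrier[OF A_carrier B_carrier])
  have X': "?X' \<in> carrier_mat m m" by (rule letter_mat_carrier[OF mw_A_carrier mw_B_carrier])
  have UX: "U * ?X \<in> carrier_mat m n" using U_carrier X by simp
  have "U * ?X * adj U = ?X'"
  proof (rule mat_eqI_unit_vecs[of _ m m])
    fix k assume k: "k < m"
    have "(U * ?X * adj U) *\<^sub>v unit_vec m k = U *\<^sub>v (?X *\<^sub>v orbit k)"
      using U_carrier X k by (simp add: assoc_mult_mat_vec[of _ m n _ m] assoc_mult_mat_vec[of _ m n _ n]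
          adj_U_unit_vec orbit_carrier)
    also have "\<dots> = ?X' *\<^sub>v unit_vec m k"
      using k m_pos U_carrier orbit_carrier
      by (simp add: letter_mat_orbit mw_letter_unit_vec mult_mat_vec[OF U_carrier] U_orbit)
    finally show "(U * ?X * adj U) *\<^sub>v unit_vec m k = ?X' *\<^sub>v unit_vec m k" .
  qed (use UX U_carrier X' in auto)
  moreover have "U * ?X = U * ?X * (adj U * U)" using adj_U_U right_mult_one_mat[OF UX] by simp
  moreover have "\<dots> = (U * ?X * adj U) * U"
    using assoc_mult_mat[OF UX adj_carrier[OF U_carrier] U_carrier] by simp
  ultimately show ?thesis by simp
qed

lemma unit_equiv_mw: "m = n \<and> unit_equiv n A B n (mw_A r lam) (mw_B r lam)"
  unfolding unit_equiv_def
  using m_eq_n U_carrier adj_U_U U_adj_U U_intertwines[of False] U_intertwines[of True]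
  by (auto simp: letter_mat_def)

end

lemma atomic_irreducible_contained:
  assumes atomic: "atomic n A B" and irreducible: "irreducible_pmod n A B"
  shows "\<exists>\<xi> w. w \<noteq> [] \<and> contained n A B \<xi> (per_ray w)"
proof (rule ccontr)
  assume none: "\<not> ?thesis"
  have empty: "{\<xi> \<in> Hcomp n A B. \<exists>w. w \<noteq> [] \<and> contained n A B \<xi> (per_ray w)} = {}"
    using none by blast
  have "carrier_vec n = Hatom n A B"
    using atomic Hcomp_irreducible[OF irreducible] by (simp add: atomic_def)
  also have "\<dots> = cspan n {}" by (simp only: Hatom_def empty)
  also have "\<dots> = {0\<^sub>v n}" by (rule cspan_empty)
  finally show False using irreducible by (simp add: irreducible_pmod_def irred_sub_def)
qed

lemma contained_in_representative_ray:
  assumes W: "rep_set W" and P: "pmodule n A B"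
    and w: "w \<noteq> []" and \<xi>: "contained n A B \<xi> (per_ray w)"
  shows "\<exists>r\<in>W. \<exists>\<xi>'. contained n A B \<xi>' (per_ray r)"
proof -
  obtain u k where u: "prime_word u" and "k \<ge> 1" and "w = concat (replicate k u)"
    using prime_root_exists[OF w] by blast
  then have w_u: "per_ray w = per_ray u" using per_ray_concat_replicate prime_word_nonempty by blast
  obtain r j where r: "r \<in> W" and u_r: "u = rotate j r" using W u unfolding rep_set_def by blast
  have r_ne: "r \<noteq> []" using W r prime_word_nonempty by (auto simp: rep_set_def)
  define a where "a = length r - j mod length r"
  have "(a + j) mod length r = (a + j mod length r) mod length r" by (simp add: mod_add_right_eq)
  also have "a + j mod length r = length r" using r_ne by (simp add: a_def)
  finally have dvd: "length r dvd a + j" by (simp add: dvd_eq_mod_eq_0)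
  have "contained n A B \<xi> (shift_ray j (per_ray r))"
    using \<xi> w_u u_r per_ray_rotate[OF r_ne] by simp
  from contained_act_prefix[OF P this, of a]
  have "contained n A B (act A B (prefix_ray (shift_ray j (per_ray r)) a) \<xi>) (per_ray r)"
    using dvd by (simp add: shift_per_ray_dvd)
  then show ?thesis using r by blast
qed

text \<open>Norms along the ray are non-increasing and are restored at every multiple of |r|.\<close>

lemma isometric_along_periodic_eigenvector:
  assumes P: "pmodule n A B" and r: "r \<noteq> []" and v: "v \<in> carrier_vec n"
    and act_v: "act A B r v = lam \<cdot>\<^sub>v v" and lam: "cmod lam = 1"
  shows "isometric_along A B v (per_ray r)"
proof (rule isometric_alongI_frequently[OF P v])
  have A: "A \<in> carrier_mat n n" and B: "B \<in> carrier_mat n n" using P by (simp_all add: pmodule_carrier)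
  have pow: "act A B (concat (replicate k r)) v = lam ^ k \<cdot>\<^sub>v v" for k
  proof (induct k)
    case (Suc k)
    then show ?case using act_v by (simp add: act_append act_smult[OF A B v] smult_smult_assoc)
  qed simp
  fix k
  have "vnorm (act A B (prefix_ray (per_ray r) (k * length r)) v) = vnorm v"
    using pow lam by (simp add: prefix_per_ray_mult[OF r] vnorm_smult norm_power)
  moreover have "k \<le> k * length r" using r by (simp add: Suc_leI)
  ultimately show "\<exists>K\<ge>k. vnorm (act A B (prefix_ray (per_ray r) K) v) \<ge> vnorm v"
    by (intro exI[of _ "k * length r"]) simp
qed

text \<open>The orbit of xi under the matrix of r does not decay, so this matrix has an eigenvalue
  of modulus at least one; as the P-module is contractive, the modulus is one.\<close>

lemma periodic_eigenvector_exists: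
  assumes P: "pmodule n A B" and r: "r \<noteq> []" and \<xi>: "contained n A B \<xi> (per_ray r)"
  obtains lam v where "v \<in> carrier_vec n" "v \<noteq> 0\<^sub>v n" "act A B r v = lam \<cdot>\<^sub>v v" "cmod lam = 1"
proof -
  have A: "A \<in> carrier_mat n n" and B: "B \<in> carrier_mat n n" using P by (simp_all add: pmodule_carrier)
  let ?T = "word_mat n A B r"
  have \<xi>: "\<xi> \<in> carrier_vec n" "\<xi> \<noteq> 0\<^sub>v n" "isometric_along A B \<xi> (per_ray r)"
    using \<xi> by (simp_all add: contained_iff_isometric_along)
  have "vnorm (?T ^\<^sub>m k *\<^sub>v \<xi>) = vnorm \<xi>" for k
  proof -
    have "vnorm (act A B (prefix_ray (per_ray r) (k * length r)) \<xi>) = vnorm \<xi>"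
      using \<xi>(3) unfolding isometric_along_def by blast
    then show ?thesis using word_mat_power_mult_vec[OF A B \<xi>(1)] prefix_per_ray_mult[OF r] by simp
  qed
  then obtain lam v where ev: "eigenvector ?T v lam" and lam_ge: "cmod lam \<ge> 1"
    using eigenvalue_ge_1_if_orbit_isometric[OF word_mat_carrier[OF A B] \<xi>(1,2)] by blast
  have v: "v \<in> carrier_vec n" "v \<noteq> 0\<^sub>v n" using ev by (simp_all add: eigenvector_def dim_word_mat[OF A B])
  have act_v: "act A B r v = lam \<cdot>\<^sub>v v"
    using ev v act_eq_word_mat[OF A B v(1)] by (simp add: eigenvector_def)
  have "cmod lam * vnorm v \<le> vnorm v" using vnorm_act_le[OF P v(1), of r] act_v by (simp add: vnorm_smult)
  then have "cmod lam = 1" using lam_ge vnorm_pos[OF v] by (simp add: mult_le_cancel_right1)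
  then show ?thesis using that v act_v by blast
qed

lemma periodic_unit_eigenvector_exists:
  assumes P: "pmodule n A B" and r: "r \<noteq> []" and \<xi>: "contained n A B \<xi> (per_ray r)"
  shows "\<exists>lam \<eta>. \<eta> \<in> carrier_vec n \<and> vnorm \<eta> = 1 \<and> isometric_along A B \<eta> (per_ray r) \<and>
    act A B r \<eta> = lam \<cdot>\<^sub>v \<eta> \<and> cmod lam = 1"
proof -
  have A: "A \<in> carrier_mat n n" and B: "B \<in> carrier_mat n n" using P by (simp_all add: pmodule_carrier)
  obtain lam v where v: "v \<in> carrier_vec n" "v \<noteq> 0\<^sub>v n"
    and act_v: "act A B r v = lam \<cdot>\<^sub>v v" and lam: "cmod lam = 1"
    using periodic_eigenvector_exists[OF P r \<xi>] by blast
  define \<eta> where "\<eta> = complex_of_real (1 / vnorm v) \<cdot>\<^sub>v v"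
  have \<eta>: "\<eta> \<in> carrier_vec n" using v by (simp add: \<eta>_def)
  moreover have "vnorm \<eta> = 1" using vnorm_pos[OF v] by (simp add: \<eta>_def vnorm_smult norm_divide)
  moreover have act_\<eta>: "act A B r \<eta> = lam \<cdot>\<^sub>v \<eta>"
    using act_v v by (simp add: \<eta>_def act_smult[OF A B] smult_smult_assoc mult.commute)
  ultimately show ?thesis
    using isometric_along_periodic_eigenvector[OF P r \<eta> act_\<eta> lam] lam by blast
qed

lemma atomic_irreducible_unit_equiv_mw:
  assumes W: "rep_set W" and P: "pmodule n A B"
    and atomic: "atomic n A B" and irreducible: "irreducible_pmod n A B"
  shows "\<exists>v\<in>W. length v = n \<and> (\<exists>lam. cmod lam = 1 \<and> unit_equiv n A B n (mw_A v lam) (mw_B v lam))"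
proof -
  obtain \<xi> w where "w \<noteq> []" "contained n A B \<xi> (per_ray w)"
    using atomic_irreducible_contained[OF atomic irreducible] by blast
  then obtain r \<xi>' where r: "r \<in> W" and \<xi>': "contained n A B \<xi>' (per_ray r)"
    using contained_in_representative_ray[OF W P] by blast
  have prime: "prime_word r" using W r by (simp add: rep_set_def)
  obtain lam \<eta> where "\<eta> \<in> carrier_vec n" "vnorm \<eta> = 1" "isometric_along A B \<eta> (per_ray r)"
    and "act A B r \<eta> = lam \<cdot>\<^sub>v \<eta>" and lam: "cmod lam = 1"
    using periodic_unit_eigenvector_exists[OF P prime_word_nonempty[OF prime] \<xi>'] by blast
  then interpret periodic_unit_eigenvector n A B r lam \<eta>
    using P irreducible prime by unfold_locales
  show ?thesis using unit_equiv_mw r lam by blast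
qed

theorem proposition2p18:
  fixes W :: "bool list set"
  assumes "rep_set W"
  shows
   "(\<forall>w \<in> W. \<forall>\<phi>. cmod \<phi> = 1 \<longrightarrow>
       pmodule (length w) (A_w w * D_phi (length w) \<phi>) (B_w w * D_phi (length w) \<phi>) \<and>
       irreducible_pmod (length w) (A_w w * D_phi (length w) \<phi>) (B_w w * D_phi (length w) \<phi>) \<and>
       Hatom_ray (length w) (A_w w * D_phi (length w) \<phi>) (B_w w * D_phi (length w) \<phi>) (per_ray w)
         = carrier_vec (length w))
  \<and> (\<forall>n A B. pmodule n A B \<and> atomic n A B \<and> irreducible_pmod n A B \<longrightarrow>
       (\<exists>v \<in> W. length v = n \<and> (\<exists>lam. cmod lam = 1 \<and>
          unit_equiv n A B n (A_w v * D_phi n lam) (B_w v * D_phi n lam))))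
  \<and> (\<forall>w \<in> W. \<forall>w' \<in> W. \<forall>\<phi> \<phi>'. cmod \<phi> = 1 \<longrightarrow> cmod \<phi>' = 1 \<longrightarrow>
       (unit_equiv (length w) (A_w w * D_phi (length w) \<phi>) (B_w w * D_phi (length w) \<phi>)
          (length w') (A_w w' * D_phi (length w') \<phi>') (B_w w' * D_phi (length w') \<phi>')
        \<longleftrightarrow> (w, \<phi>) = (w', \<phi>')))"
proof (fold mw_A_def mw_B_def, intro conjI ballI allI impI)
  fix w \<phi> assume "w \<in> W" and \<phi>: "cmod \<phi> = 1"
  then have prime: "prime_word w" using assms by (simp add: rep_set_def)
  show "pmodule (length w) (mw_A w \<phi>) (mw_B w \<phi>)" by (rule mw_pmodule[OF \<phi>])
  show "irreducible_pmod (length w) (mw_A w \<phi>) (mw_B w \<phi>)" by (rule mw_irreducible[OF prime \<phi>])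
  show "Hatom_ray (length w) (mw_A w \<phi>) (mw_B w \<phi>) (per_ray w) = carrier_vec (length w)"
    by (rule mw_Hatom_ray[OF prime \<phi>])
next
  fix n A B assume "pmodule n A B \<and> atomic n A B \<and> irreducible_pmod n A B"
  then show "\<exists>v \<in> W. length v = n \<and> (\<exists>lam. cmod lam = 1 \<and>
      unit_equiv n A B n (A_w v * D_phi n lam) (B_w v * D_phi n lam))"
    using atomic_irreducible_unit_equiv_mw[OF assms] unfolding mw_A_def mw_B_def by fastforce
next
  fix w w' \<phi> \<phi>' assume "w \<in> W" "w' \<in> W" and "cmod \<phi> = 1"
  then show "unit_equiv (length w) (mw_A w \<phi>) (mw_B w \<phi>) (length w') (mw_A w' \<phi>') (mw_B w' \<phi>')
    \<longleftrightarrow> (w, \<phi>) = (w', \<phi>')"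
    by (intro mw_unit_equiv_iff[OF assms]) auto
qed

end
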